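(* Let $G$ be a finite group with the supercharacter theory for which $\mathrm{scf}(G)=\mathbb{C}\text{-span}\{\mathbb{1},\mathbf{reg}\}$, and let $\mu=(\mu_1,\dots,\mu_\ell)\vDash n$. (Case $\alpha=\beta=\iota=\mathbb{1}$.) In $\mathcal{H}_{(\mathbb{1},\mathbb{1},\mathbb{1})}$ with antipode $S$, \[ S(\chi^{\mathrm{bn}_0(\mu)})=(-1)^{\ell(\mu)}\,\chi^{\mathrm{bn}_0((\mu_\ell))}\cdot\chi^{\mathrm{bn}_0((\mu_{\ell-1}))}\cdots\chi^{\mathrm{bn}_0((\mu_1))}. \] (Case $\iota=\mathbf{reg}$, $\alpha=\mathbb{1}$, $\beta=(\mathbf{reg}-\mathbb{1})^*$.) In $\mathcal{H}_{(\mathbf{reg},\mathbb{1},(\mathbf{reg}-\mathbb{1})^* )}$ with antipode $S$, \[ S\big(\mathrm{Ind}_{G^{n-1}_{\mathrm{bn}_1(\mu)}}^{G^{n-1}}(\mathbb{1})\big)=\sum_{\nu\text{ refines }(\mu_\ell,\dots,\mu_2,\mu_1)}(-1)^{\ell(\nu)}\,\mathrm{Ind}_{G^{n-1}_{\mathrm{bn}_1(\nu)}}^{G^{n-1}}(\mathbb{1}). \]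
   Context: $G$ is a nontrivial finite group with superclasses $\{1\}$, $G\setminus\{1\}$ and supercharacters $\mathbb{1}$, $\mathbf{reg}-\mathbb{1}$, so $\mathrm{scf}(G)=\mathbb{C}\text{-span}\{\mathbb{1},\mathbf{reg}\}$; $\langle\psi,\gamma\rangle=|G|^{-1}\sum_g\psi(g)\overline{\gamma(g)}$. $(\mathbf{reg}-\mathbb{1})^*$ denotes $(\mathbf{reg}-\mathbb{1})/(|G|-1)$, the element dual to $\mathbf{reg}-\mathbb{1}$ with respect to the basis $\{\mathbb{1},\mathbf{reg}-\mathbb{1}\}$. For $n\ge1$, $G^{n-1}=G\times\cdots\times G\times\{1\}$, $\mathrm{scf}(G^{n-1})$ is spanned by $\psi_1\otimes\cdots\otimes\psi_{n-1}\otimes\chi^{()}:(g_1,\dots,g_{n-1},1)\mapsto\prod\psi_j(g_j)$ ($\chi^{()}$ trivial character of the trivial group); $\mathrm{scf}(G^{-1}):=\mathbb{C}\chi^\emptyset$. For $\iota,\alpha,\beta\in\mathrm{scf}(G)$ with $\langle\iota,\alpha\rangle=\langle\iota,\beta\rangle=1$, $\mathcal{H}_{(\iota,\alpha,\beta)}=\bigoplus_{n\ge0}\mathrm{scf}(G^{n-1})$ is the graded connected Hopf algebra with unit $\chi^\emptyset$, product $(\gamma_1\otimes\cdots\otimes\gamma_{m-1}\otimes\chi^{()})\cdot(\psi_1\otimes\cdots\otimes\psi_{n-1}\otimes\chi^{()})=\gamma_1\otimes\cdots\otimes\gamma_{m-1}\otimes\iota\otimes\psi_1\otimes\cdots\otimes\psi_{n-1}\otimes\chi^{()}$,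 coproduct $\Delta(\psi)=\sum_{A\subseteq[n]}\psi^{A}\otimes\psi^{[n]\setminus A}$ for $\psi=\psi_1\otimes\cdots\otimes\psi_{n-1}\otimes\chi^{()}$, where $\psi^\emptyset=\chi^\emptyset$; for nonempty $A=\{a_1<\dots<a_k\}$, $\psi^{A}=\lambda_A\,x_{a_1}\otimes\cdots\otimes x_{a_{k-1}}\otimes\chi^{()}$ with $x_{a_i}=\psi_{a_i}$ if $a_{i+1}=a_i+1$, else $\langle\psi_{a_i},\alpha\rangle\iota$, and $\lambda_A=\langle\psi_{a_k},\alpha\rangle$ if $a_k<n$, $1$ if $a_k=n$; $\psi^{[n]\setminus A}$ is the same with $\beta$ in place of $\alpha$. For an integer composition $\mu\vDash n$ (positive integers summing to $n$, $\ell(\mu)$ parts), let $D(\mu)=\{\mu_1,\mu_1+\mu_2,\dots,\mu_1+\cdots+\mu_{\ell-1}\}$; $\mathrm{bn}_0(\mu),\mathrm{bn}_1(\mu)\in\{0,1\}^{n-1}$ with $\mathrm{bn}_0(\mu)_j=1$ iff $j\in D(\mu)$ and $\mathrm{bn}_1(\mu)_j=1$ iff $j\notin D(\mu)$. $\chi^{\mathrm{bn}_0(\mu)}=x_1\otimes\cdots\otimes x_{n-1}\otimes\chi^{()}$ with $x_j=\mathbb{1}$ if $j\in D(\mu)$ and $x_j=\mathbf{reg}-\mathbb{1}$ otherwise (a supercharacter). For $a\in\{0,1\}^{n-1}$, $G^{n-1}_a=\{(g_1,\dots,g_{n-1},1): g_j\ne1\Rightarrow a_j=1\}$; thus $\mathrm{Ind}_{G^{n-1}_{\mathrm{bn}_1(\mu)}}^{G^{n-1}}(\mathbb{1})=y_1\otimes\cdots\otimes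 y_{n-1}\otimes\chi^{()}$ with $y_j=\mathbf{reg}$ if $j\in D(\mu)$ and $y_j=\mathbb{1}$ otherwise. $\nu$ refines $\lambda$ if $\lambda$ is obtained from $\nu$ by summing runs of consecutive parts. *)

theory Defs
  imports "HOL-Algebra.Group" Complex_Main "HOL-Library.Function_Algebras"
begin

text \<open>Elements of scf(G) are functions carrier G to complex numbers (zero outside the carrier).
 Elements of the Hopf algebra are functions on lists: the degree n component is a function on
 G^(n-1) = G x ... x G x {1}, i.e. on lists of length n whose last entry is the identity;
 the degree 0 component lives on the empty list (chi^emptyset).\<close>

definition sc_one :: "('a,'b) monoid_scheme \<Rightarrow> 'a \<Rightarrow> complex" where
  "sc_one G g = (if g \<in> carrier G then 1 else 0)"

definition sc_reg :: "('a,'b) monoid_scheme \<Rightarrow> 'a \<Rightarrow> complex" where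
  "sc_reg G g = (if g = \<one>\<^bsub>G\<^esub> then of_nat (card (carrier G)) else 0)"

definition sc_regm1 :: "('a,'b) monoid_scheme \<Rightarrow> 'a \<Rightarrow> complex" where
  "sc_regm1 G g = sc_reg G g - sc_one G g"

definition sc_regm1_dual :: "('a,'b) monoid_scheme \<Rightarrow> 'a \<Rightarrow> complex" where
  "sc_regm1_dual G g = sc_regm1 G g / (of_nat (card (carrier G)) - 1)"

definition scf :: "('a,'b) monoid_scheme \<Rightarrow> ('a \<Rightarrow> complex) set" where
  "scf G = {\<psi>. \<exists>a b. \<psi> = (\<lambda>g. a * sc_one G g + b * sc_reg G g)}"

definition inner :: "('a,'b) monoid_scheme \<Rightarrow> ('a \<Rightarrow> complex) \<Rightarrow> ('a \<Rightarrow> complex) \<Rightarrow> complex" where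
  "inner G \<psi> \<gamma> = (\<Sum>g\<in>carrier G. \<psi> g * cnj (\<gamma> g)) / of_nat (card (carrier G))"

definition scale :: "complex \<Rightarrow> ('a list \<Rightarrow> complex) \<Rightarrow> 'a list \<Rightarrow> complex" where
  "scale c f = (\<lambda>xs. c * f xs)"

definition chi_empty :: "'a list \<Rightarrow> complex" where
  "chi_empty xs = (if xs = [] then 1 else 0)"

definition tens :: "('a,'b) monoid_scheme \<Rightarrow> ('a \<Rightarrow> complex) list \<Rightarrow> 'a list \<Rightarrow> complex" where
  "tens G \<psi>s xs = (if length xs = Suc (length \<psi>s) \<and> set xs \<subseteq> carrier G \<and> last xs = \<one>\<^bsub>G\<^esub>
                    then (\<Prod>j<length \<psi>s. (\<psi>s ! j) (xs ! j)) else 0)"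

inductive_set Hspace :: "('a,'b) monoid_scheme \<Rightarrow> ('a list \<Rightarrow> complex) set" for G where
  zero: "(\<lambda>_. 0) \<in> Hspace G"
| unit: "chi_empty \<in> Hspace G"
| tens: "set \<psi>s \<subseteq> scf G \<Longrightarrow> tens G \<psi>s \<in> Hspace G"
| add: "f \<in> Hspace G \<Longrightarrow> h \<in> Hspace G \<Longrightarrow> (\<lambda>xs. f xs + h xs) \<in> Hspace G"
| smult: "f \<in> Hspace G \<Longrightarrow> scale c f \<in> Hspace G"

text \<open>Product of H_(iota,alpha,beta) (bilinear extension of the concatenation product
  inserting iota).\<close>
definition hmult :: "('a,'b) monoid_scheme \<Rightarrow> ('a \<Rightarrow> complex) \<Rightarrow> ('a list \<Rightarrow> complex)
    \<Rightarrow> ('a list \<Rightarrow> complex) \<Rightarrow> 'a list \<Rightarrow> complex" where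
  "hmult G \<iota> f h zs =
     (if zs = [] then f [] * h []
      else f [] * h zs + h [] * f zs
         + (\<Sum>j<length zs - 1. f (take j zs @ [\<one>\<^bsub>G\<^esub>]) * \<iota> (zs ! j) * h (drop (Suc j) zs)))"

definition hprod :: "('a,'b) monoid_scheme \<Rightarrow> ('a \<Rightarrow> complex) \<Rightarrow> ('a list \<Rightarrow> complex) list
    \<Rightarrow> 'a list \<Rightarrow> complex" where
  "hprod G \<iota> fs = foldr (hmult G \<iota>) fs chi_empty"

text \<open>psi^A for psi = psi_1 (x) ... (x) psi_(n-1) (x) chi^(), n = length psis + 1,
  A a subset of [n] = {1..n}, with respect to the pairing element alpha.\<close>
definition piece :: "('a,'b) monoid_scheme \<Rightarrow> ('a \<Rightarrow> complex) \<Rightarrow> ('a \<Rightarrow> complex)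
    \<Rightarrow> ('a \<Rightarrow> complex) list \<Rightarrow> nat set \<Rightarrow> 'a list \<Rightarrow> complex" where
  "piece G \<iota> \<alpha> \<psi>s A =
     (if A = {} then chi_empty
      else (let as = sorted_list_of_set A;
                k = length as;
                xs = map (\<lambda>i. if as ! (Suc i) = Suc (as ! i) then \<psi>s ! (as ! i - 1)
                               else (\<lambda>g. inner G (\<psi>s ! (as ! i - 1)) \<alpha> * \<iota> g)) [0..<k - 1];
                lam = (if last as < Suc (length \<psi>s) then inner G (\<psi>s ! (last as - 1)) \<alpha> else 1)
            in scale lam (tens G xs)))"

text \<open>S is the antipode of H_(iota,alpha,beta): a linear endomorphism of H with
  m o (S (x) id) o Delta = u o epsilon (checked on chi^emptyset and on the spanning
  pure tensors; the counit vanishes in positive degree).\<close>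
definition is_antipode :: "('a,'b) monoid_scheme \<Rightarrow> ('a \<Rightarrow> complex) \<Rightarrow> ('a \<Rightarrow> complex)
    \<Rightarrow> ('a \<Rightarrow> complex) \<Rightarrow> (('a list \<Rightarrow> complex) \<Rightarrow> ('a list \<Rightarrow> complex)) \<Rightarrow> bool" where
  "is_antipode G \<iota> \<alpha> \<beta> S \<longleftrightarrow>
     (\<forall>x\<in>Hspace G. S x \<in> Hspace G)
   \<and> (\<forall>x\<in>Hspace G. \<forall>y\<in>Hspace G. S (\<lambda>zs. x zs + y zs) = (\<lambda>zs. S x zs + S y zs))
   \<and> (\<forall>c. \<forall>x\<in>Hspace G. S (scale c x) = scale c (S x))
   \<and> S chi_empty = chi_empty
   \<and> (\<forall>\<psi>s. set \<psi>s \<subseteq> scf G \<longrightarrow>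
        (\<Sum>A\<in>Pow {1..Suc (length \<psi>s)}.
            hmult G \<iota> (S (piece G \<iota> \<alpha> \<psi>s A)) (piece G \<iota> \<beta> \<psi>s ({1..Suc (length \<psi>s)} - A)))
        = (\<lambda>_. 0))"

definition is_composition :: "nat \<Rightarrow> nat list \<Rightarrow> bool" where
  "is_composition n \<mu> \<longleftrightarrow> (\<forall>m\<in>set \<mu>. 0 < m) \<and> sum_list \<mu> = n"

definition descents :: "nat list \<Rightarrow> nat set" where
  "descents \<mu> = {sum_list (take i \<mu>) | i. 1 \<le> i \<and> i < length \<mu>}"

definition chi_bn0 :: "('a,'b) monoid_scheme \<Rightarrow> nat \<Rightarrow> nat list \<Rightarrow> 'a list \<Rightarrow> complex" where
  "chi_bn0 G n \<mu> = tens G (map (\<lambda>j. if j \<in> descents \<mu> then sc_one G else sc_regm1 G) [1..<n])"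

definition ind_bn1 :: "('a,'b) monoid_scheme \<Rightarrow> nat \<Rightarrow> nat list \<Rightarrow> 'a list \<Rightarrow> complex" where
  "ind_bn1 G n \<mu> = tens G (map (\<lambda>j. if j \<in> descents \<mu> then sc_reg G else sc_one G) [1..<n])"

definition refines :: "nat list \<Rightarrow> nat list \<Rightarrow> bool" where
  "refines \<nu> lam \<longleftrightarrow> (\<exists>bs. concat bs = \<nu> \<and> (\<forall>b\<in>set bs. b \<noteq> []) \<and> map sum_list bs = lam)"

end

(* A pure tensor whose factors are L False or L True (for suitable class functions L) is coded by
   a boolean list; the codes of compositions, True exactly at the descents and at the end, give
   chi^{bn_0(mu)} and Ind(1).  For A a subset of [n], the piece psi^A is either zero or again such
   a tensor, coded by the restriction of the code to A.  In the antipode recursion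
   sum_A S(psi^A) psi^([n]-A) = 0 the term A = [n] is S(psi) and all other terms involve S only in
   lower degree, so it suffices to check that the claimed values satisfy the recursion.  This is
   a sum over masks of the code; splitting off its first block, only a few masks of that block
   contribute, and their contributions cancel. *)

theory Submission
  imports Defs
begin


section \<open>Codes of compositions\<close>

definition block :: "nat \<Rightarrow> bool list" where
  "block k = replicate k False @ [True]"

definition part_code :: "nat \<Rightarrow> bool list" where
  "part_code p = (if p = 0 then [] else block (p - 1))"

text \<open>The code of a composition \<open>\<mu>\<close> of \<open>n\<close> has length \<open>n\<close>, and its \<open>j\<close>-th entry is \<open>True\<close> iff
  \<open>j \<in> D(\<mu>)\<close> or \<open>j = n\<close>; \<open>part_code p\<close> codes the one-part composition \<open>(p)\<close>.\<close>
definition comp_code :: "nat list \<Rightarrow> bool list" where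
  "comp_code \<mu> = concat (map part_code \<mu>)"

lemma length_block [simp]: "length (block k) = Suc k"
  and block_not_Nil [simp]: "block k \<noteq> []"
  and last_block [simp]: "last (block k)"
  and count_list_block [simp]: "count_list (block k) True = 1"
  by (simp_all add: block_def count_list_eq_length_filter)

lemma block_Suc: "block (Suc k) = False # block k"
  by (simp add: block_def)

lemma length_part_code [simp]: "length (part_code p) = p"
  and part_code_0 [simp]: "part_code 0 = []"
  by (simp_all add: part_code_def)

lemma part_code_Suc: "part_code (Suc p) = (if p = 0 then [True] else False # part_code p)"
  by (cases p) (simp_all add: part_code_def block_def)

lemma part_code_ends_True: "part_code p = [] \<or> last (part_code p)"
  by (simp add: part_code_def)

lemma comp_code_Nil [simp]: "comp_code [] = []"
  and comp_code_Cons [simp]: "comp_code (p # \<mu>) = part_code p @ comp_code \<mu>"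
  and comp_code_append [simp]: "comp_code (\<mu> @ \<nu>) = comp_code \<mu> @ comp_code \<nu>"
  by (simp_all add: comp_code_def)

lemma length_comp_code [simp]: "length (comp_code \<mu>) = sum_list \<mu>"
  by (induction \<mu>) auto

lemma count_list_comp_code: "0 \<notin> set \<mu> \<Longrightarrow> count_list (comp_code \<mu>) True = length \<mu>"
  by (induction \<mu>) (auto simp: part_code_def)

lemma comp_code_ends_True: "comp_code \<mu> = [] \<or> last (comp_code \<mu>)"
  by (induction \<mu>) (auto simp: part_code_def last_append)

lemma split_first_block:
  assumes "c \<noteq> []" "last c"
  obtains k c' where "c = block k @ c'" "c' = [] \<or> last c'"
  using assms
proof (induction c arbitrary: thesis)
  case (Cons x c)
  show ?case
  proof (cases x)
    case True
    then show ?thesis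
      using Cons.prems by (intro Cons.prems(1)[of 0 c]) (auto simp: block_def split: if_splits)
  next
    case False
    then have "c \<noteq> []" "last c"
      using Cons.prems(3) by (auto split: if_splits)
    then obtain k c' where "c = block k @ c'" "c' = [] \<or> last c'"
      using Cons.IH by blast
    then show ?thesis
      using False by (intro Cons.prems(1)[of "Suc k" c']) (simp_all add: block_Suc)
  qed
qed simp

lemma ex_comp_code: "Y = [] \<or> last Y \<Longrightarrow> \<exists>\<nu>. 0 \<notin> set \<nu> \<and> comp_code \<nu> = Y"
proof (induction "length Y" arbitrary: Y rule: less_induct)
  case less
  show ?case
  proof (cases "Y = []")
    case False
    then obtain k Y' where Y: "Y = block k @ Y'" and Y': "Y' = [] \<or> last Y'"
      using less.prems split_first_block by blast
    moreover have "length Y' < length Y"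
      using Y by simp
    ultimately obtain \<nu> where "0 \<notin> set \<nu>" "comp_code \<nu> = Y'"
      using less.hyps by blast
    then show ?thesis
      using Y by (intro exI[of _ "Suc k # \<nu>"]) (simp add: part_code_def)
  qed (auto intro: exI[of _ "[]"])
qed

lemma takeWhile_Not_block: "takeWhile Not (block k @ X) = replicate k False"
  by (induction k) (simp_all add: block_Suc block_def)

lemma takeWhile_Not_part_code: "0 < p \<Longrightarrow> takeWhile Not (part_code p @ X) = replicate (p - 1) False"
  by (simp add: part_code_def takeWhile_Not_block)

lemma inj_on_comp_code: "inj_on comp_code {\<nu>. 0 \<notin> set \<nu>}"
proof (rule inj_onI)
  fix \<nu> \<nu>' :: "nat list"
  assume "\<nu> \<in> {\<nu>. 0 \<notin> set \<nu>}" "\<nu>' \<in> {\<nu>. 0 \<notin> set \<nu>}" "comp_code \<nu> = comp_code \<nu>'"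
  then show "\<nu> = \<nu>'"
  proof (induction \<nu> arbitrary: \<nu>')
    case Nil
    then show ?case
      using length_comp_code[of \<nu>'] by (cases \<nu>') auto
  next
    case (Cons p \<nu>)
    then obtain q \<nu>'' where \<nu>': "\<nu>' = q # \<nu>''"
      by (cases \<nu>') (auto simp: part_code_def)
    have "replicate (p - 1) False = replicate (q - 1) False"
      using Cons.prems takeWhile_Not_part_code[of p "comp_code \<nu>"] takeWhile_Not_part_code[of q "comp_code \<nu>''"]
      by (auto simp: \<nu>')
    then have "p = q"
      using Cons.prems by (auto simp: \<nu>')
    then show ?case
      using Cons by (auto simp: \<nu>')
  qed
qed

definition reverse_blocks :: "bool list \<Rightarrow> bool list" where
  "reverse_blocks X = (if X = [] then [] else rev (butlast X) @ [True])"

lemma reverse_blocks_Nil [simp]: "reverse_blocks [] = []"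
  by (simp add: reverse_blocks_def)

lemma reverse_blocks_ends_True: "reverse_blocks X = [] \<or> last (reverse_blocks X)"
  by (simp add: reverse_blocks_def)

lemma reverse_blocks_block [simp]: "reverse_blocks (block k) = block k"
  by (simp add: reverse_blocks_def block_def)

lemma reverse_blocks_part_code [simp]: "reverse_blocks (part_code p) = part_code p"
  by (simp add: part_code_def)

lemma reverse_blocks_append:
  assumes "X = [] \<or> last X" "Y = [] \<or> last Y"
  shows "reverse_blocks (X @ Y) = reverse_blocks Y @ reverse_blocks X"
proof (cases "X = [] \<or> Y = []")
  case False
  then have "X = butlast X @ [True]"
    using assms(1) by (metis append_butlast_last_id)
  then have "butlast (X @ Y) = butlast X @ [True] @ butlast Y"
    using False by (metis append.assoc butlast_append)
  then show ?thesis
    using False by (simp add: reverse_blocks_def)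
qed auto

lemma reverse_blocks_comp_code: "reverse_blocks (comp_code \<mu>) = comp_code (rev \<mu>)"
  by (induction \<mu>) (simp_all add: reverse_blocks_append comp_code_ends_True part_code_ends_True)

text \<open>On codes of compositions this is refinement (see \<open>refinements_comp_code\<close>).\<close>
definition refinements :: "bool list \<Rightarrow> bool list set" where
  "refinements L = {Y. list_all2 (\<longrightarrow>) L Y}"

lemma refinements_replicate_False: "refinements (replicate n False) = {Y. length Y = n}"
  by (auto simp: refinements_def list_all2_conv_all_nth)

lemma refinements_Nil [simp]: "refinements [] = {[]}"
  and refinements_True [simp]: "refinements [True] = {[True]}"
  and refinements_False [simp]: "refinements [False] = {[True], [False]}"
  by (auto simp: refinements_def list_all2_Cons1)

lemma refinements_append:
  "refinements (La @ Lb) = (\<lambda>(Y1, Y2). Y1 @ Y2) ` (refinements La \<times> refinements Lb)"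
  by (force simp: refinements_def list_all2_append1 list_all2_lengthD
      intro: list_all2_appendI)

lemma sum_refinements_append:
  "(\<Sum>Y\<in>refinements (La @ Lb). \<phi> Y) = (\<Sum>Y1\<in>refinements La. \<Sum>Y2\<in>refinements Lb. \<phi> (Y1 @ Y2))"
proof -
  have "inj_on (\<lambda>(Y1, Y2). Y1 @ Y2) (refinements La \<times> refinements Lb)"
    by (rule inj_onI) (clarsimp simp: refinements_def, metis append_eq_append_conv list_all2_lengthD)
  then show ?thesis
    by (simp add: refinements_append sum.reindex sum.cartesian_product split_def)
qed

lemma refinements_ends_True:
  assumes "Y \<in> refinements X" "X = [] \<or> last X"
  shows "Y = [] \<or> last Y"
proof (cases "X = []")
  case False
  then have "X ! (length X - 1)" "length Y = length X"
    using assms by (auto simp: refinements_def last_conv_nth list_all2_lengthD)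
  moreover have "length X - 1 < length X"
    using False by simp
  then have "X ! (length X - 1) \<longrightarrow> Y ! (length X - 1)"
    using assms(1) by (simp add: refinements_def list_all2_conv_all_nth)
  ultimately have "Y \<noteq> []" "Y ! (length Y - 1)"
    using False by auto
  then show ?thesis
    by (simp add: last_conv_nth)
qed (use assms in \<open>simp add: refinements_def\<close>)

section \<open>Sums over boolean lists\<close>

lemma finite_length_eq_bool_lists [simp]: "finite {m :: bool list. length m = n}"
  using finite_lists_length_eq[of "UNIV :: bool set" n] by simp

lemma sum_lists_snoc:
  "(\<Sum>Z | length Z = Suc k. \<phi> Z)
    = (\<Sum>Z | length Z = k. \<phi> (Z @ [True])) + (\<Sum>Z | length Z = k. \<phi> (Z @ [False]))"
proof -
  have "replicate k False @ [False] = replicate (Suc k) False"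
    by (simp add: replicate_append_same)
  then have "(\<Sum>Z | length Z = Suc k. \<phi> Z) = (\<Sum>Z\<in>refinements (replicate k False @ [False]). \<phi> Z)"
    by (simp only: refinements_replicate_False)
  also have "\<dots> = (\<Sum>Z1\<in>refinements (replicate k False). \<Sum>Z2\<in>refinements [False]. \<phi> (Z1 @ Z2))"
    by (rule sum_refinements_append)
  finally show ?thesis
    by (simp add: refinements_replicate_False sum.distrib)
qed

lemma sum_lists_append:
  fixes \<phi> :: "bool list \<Rightarrow> 'v :: comm_monoid_add"
  shows "(\<Sum>m | length m = a + b. \<phi> m) = (\<Sum>m1 | length m1 = a. \<Sum>m2 | length m2 = b. \<phi> (m1 @ m2))"
proof -
  have "(\<Sum>m | length m = a + b. \<phi> m) = (\<Sum>m\<in>refinements (replicate a False @ replicate b False). \<phi> m)"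
    by (simp add: refinements_replicate_False flip: replicate_add)
  also have "\<dots> = (\<Sum>m1\<in>refinements (replicate a False). \<Sum>m2\<in>refinements (replicate b False). \<phi> (m1 @ m2))"
    by (rule sum_refinements_append)
  finally show ?thesis
    by (simp add: refinements_replicate_False)
qed

lemma sum_refinements_block:
  "(\<Sum>Y\<in>refinements (block k). \<phi> Y) = (\<Sum>Z | length Z = k. \<phi> (Z @ [True]))"
  by (simp add: block_def sum_refinements_append refinements_replicate_False)

lemma sum_lists_by_last_True:
  "(\<Sum>Z | length Z = k. \<phi> Z) = (\<Sum>p\<le>k. \<Sum>Y\<in>refinements (part_code p). \<phi> (Y @ replicate (k - p) False))"
proof (induction k arbitrary: \<phi>)
  case 0
  then show ?case by (simp add: part_code_def)
next
  case (Suc k)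
  have "(\<Sum>Z | length Z = k. \<phi> (Z @ [False]))
      = (\<Sum>p\<le>k. \<Sum>Y\<in>refinements (part_code p). \<phi> (Y @ replicate (Suc k - p) False))"
    using Suc.IH[of "\<lambda>Z. \<phi> (Z @ [False])"]
    by (simp add: Suc_diff_le replicate_append_same)
  moreover have "(\<Sum>Z | length Z = k. \<phi> (Z @ [True]))
      = (\<Sum>Y\<in>refinements (part_code (Suc k)). \<phi> (Y @ replicate (Suc k - Suc k) False))"
    by (simp add: part_code_def sum_refinements_block)
  ultimately show ?case
    by (simp add: sum_lists_snoc add.commute)
qed

lemma alternating_sum_part_codes:
  fixes h :: "bool list \<Rightarrow> 'v :: comm_ring_1"
  assumes "f \<ge> 1"
  shows "(\<Sum>p\<le>f. \<Sum>Y\<in>refinements (part_code p). (-1) ^ count_list Y True * h (Y @ part_code (f - p))) = 0"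
proof -
  obtain k where f: "f = Suc k" using assms by (cases f) auto
  have "(\<Sum>p\<le>k. \<Sum>Y\<in>refinements (part_code p). (-1) ^ count_list Y True * h (Y @ part_code (f - p)))
      = (\<Sum>Z | length Z = k. (-1) ^ count_list Z True * h (Z @ [True]))"
    by (subst sum_lists_by_last_True)
      (auto simp: f part_code_def block_def Suc_diff_le intro!: sum.cong)
  moreover have "(\<Sum>Y\<in>refinements (part_code f). (-1) ^ count_list Y True * h (Y @ part_code (f - f)))
      = - (\<Sum>Z | length Z = k. (-1) ^ count_list Z True * h (Z @ [True]))"
    by (simp add: f part_code_def sum_refinements_block sum_negf)
  ultimately show ?thesis
    by (simp add: f)
qed

section \<open>Masks\<close>

text \<open>A mask \<open>m\<close> selects the positions of a subset \<open>A\<close>.  \<open>mask_restrict m c\<close> codes the piece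
  \<open>\<psi>\<^sup>A\<close> of the tensor coded by \<open>c\<close>: the entries of \<open>c\<close> at the selected positions, except that the
  last position of each run of \<open>m\<close> gets \<open>True\<close>.  An exit of \<open>m\<close> is a selected position followed by
  an unselected one; there the piece pairs its factor with \<open>\<alpha>\<close> or \<open>\<beta>\<close>, and \<open>exits_in P m c\<close> says that
  \<open>P\<close> holds for the entries of \<open>c\<close> at all exits.\<close>
fun mask_restrict :: "bool list \<Rightarrow> bool list \<Rightarrow> bool list" where
  "mask_restrict (x # m) (b # c) = (if x then [(m \<noteq> [] \<and> hd m) \<longrightarrow> b] else []) @ mask_restrict m c"
| "mask_restrict _ _ = []"

fun exits_in :: "(bool \<Rightarrow> bool) \<Rightarrow> bool list \<Rightarrow> bool list \<Rightarrow> bool" where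
  "exits_in P (x # m) (b # c) \<longleftrightarrow> (x \<and> m \<noteq> [] \<and> \<not> hd m \<longrightarrow> P b) \<and> exits_in P m c"
| "exits_in P _ _ \<longleftrightarrow> True"

lemma last_mask_restrict:
  "length m = length c \<Longrightarrow> mask_restrict m c \<noteq> [] \<Longrightarrow> last (mask_restrict m c)"
proof (induction m c rule: mask_restrict.induct)
  case (1 x m b c)
  then show ?case
    by (cases m; cases c) auto
qed auto

lemma mask_restrict_ends_True:
  "length m = length c \<Longrightarrow> mask_restrict m c = [] \<or> last (mask_restrict m c)"
  using last_mask_restrict by blast

lemma mask_restrict_replicate_True:
  "c \<noteq> [] \<Longrightarrow> last c \<Longrightarrow> mask_restrict (replicate (length c) True) c = c"
proof (induction c)
  case (Cons b c)
  then show ?case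
    by (cases c) auto
qed simp

lemma mask_restrict_replicate_False [simp]: "mask_restrict (replicate n False) c = []"
proof (induction n arbitrary: c)
  case (Suc n)
  then show ?case
    by (cases c) auto
qed simp

lemma length_mask_restrict_le: "length (mask_restrict m c) \<le> length m"
  by (induction m c rule: mask_restrict.induct) auto

lemma length_mask_restrict_less:
  "length m = length c \<Longrightarrow> m \<noteq> replicate (length c) True \<Longrightarrow> length (mask_restrict m c) < length c"
proof (induction m c rule: mask_restrict.induct)
  case (1 x m b c)
  have "length (mask_restrict m c) \<le> length c"
    using length_mask_restrict_le[of m c] "1.prems"(1) by simp
  then show ?case
    using "1.IH" "1.prems" by (cases "m = replicate (length c) True") auto
qed auto

lemma mask_restrict_append:
  assumes "length m1 = length c1" "c1 \<noteq> []" "last c1"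
  shows "mask_restrict (m1 @ m2) (c1 @ c2) = mask_restrict m1 c1 @ mask_restrict m2 c2"
  using assms
proof (induction m1 c1 rule: mask_restrict.induct)
  case (1 x m b c)
  then show ?case
    by (cases m; cases c) auto
qed auto

lemma exits_in_append:
  assumes "length m1 = length c1" "c1 \<noteq> []" "last c1" "P True"
  shows "exits_in P (m1 @ m2) (c1 @ c2) \<longleftrightarrow> exits_in P m1 c1 \<and> exits_in P m2 c2"
  using assms
proof (induction m1 c1 rule: mask_restrict.induct)
  case (1 x m b c)
  then show ?case
    by (cases m; cases c) auto
qed auto

lemma exits_in_replicate [simp]: "exits_in P (replicate n x) c"
proof (induction n arbitrary: c)
  case (Suc n)
  then show ?case
    by (cases c; cases n) auto
qed simp

lemma exits_in_const_True [simp]: "exits_in (\<lambda>_. True) m c"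
  by (induction "\<lambda>_ :: bool. True" m c rule: exits_in.induct) auto

lemma exits_in_conv_nth:
  "length m = length c \<Longrightarrow>
    exits_in P m c \<longleftrightarrow> (\<forall>i. Suc i < length m \<longrightarrow> m ! i \<longrightarrow> \<not> m ! Suc i \<longrightarrow> P (c ! i))"
proof (induction P m c rule: exits_in.induct)
  case (1 P x m b c)
  have split: "(\<forall>i. Q i) \<longleftrightarrow> Q 0 \<and> (\<forall>j. Q (Suc j))" for Q :: "nat \<Rightarrow> bool"
    by (metis not0_implies_Suc)
  show ?case
    using 1 by (subst split) (cases m; auto)
qed auto

definition prefix_mask :: "nat \<Rightarrow> nat \<Rightarrow> bool list" where
  "prefix_mask n p = replicate p True @ replicate (n - p) False"

lemma prefix_mask_Suc:
  "prefix_mask (Suc n) p = (if p = 0 then False # prefix_mask n 0 else True # prefix_mask n (p - 1))"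
  by (cases p) (simp_all add: prefix_mask_def)

lemma prefix_mask_0 [simp]: "prefix_mask n 0 = replicate n False"
  and prefix_mask_Suc_Suc [simp]: "prefix_mask (Suc n) (Suc p) = True # prefix_mask n p"
  by (simp_all add: prefix_mask_def)

lemma prefix_mask_Suc_not_Nil [simp]: "prefix_mask (Suc n) p \<noteq> []"
  and hd_prefix_mask [simp]: "hd (prefix_mask (Suc n) p) \<longleftrightarrow> p \<noteq> 0"
  by (cases p; simp add: prefix_mask_def)+

lemma length_prefix_mask [simp]: "p \<le> n \<Longrightarrow> length (prefix_mask n p) = n"
  by (simp add: prefix_mask_def)

lemma inj_on_prefix_mask: "inj_on (prefix_mask n) {..n}"
proof (rule inj_onI)
  fix p q assume "p \<in> {..n}" "q \<in> {..n}" "prefix_mask n p = prefix_mask n q"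
  then have "count_list (prefix_mask n p) True = count_list (prefix_mask n q) True"
    by simp
  then show "p = q"
    by (simp add: prefix_mask_def count_list_eq_length_filter)
qed

lemma exits_in_Not_block_iff:
  "length m = Suc k \<Longrightarrow> exits_in (\<lambda>b. b) (map Not m) (block k) \<longleftrightarrow> (\<exists>p\<le>Suc k. m = prefix_mask (Suc k) p)"
proof (induction k arbitrary: m)
  case 0
  then obtain x where "m = [x]"
    by (auto simp: length_Suc_conv)
  then show ?case
    by (cases x) (auto simp: block_def prefix_mask_def intro: exI[of _ 0] exI[of _ 1])
next
  case (Suc k)
  then obtain x m' where m: "m = x # m'" and m': "length m' = Suc k"
    by (auto simp: length_Suc_conv)
  then have "m' \<noteq> []"
    by auto
  have "exits_in (\<lambda>b. b) (map Not m) (block (Suc k)) \<longleftrightarrow> (x \<or> \<not> hd m') \<and> (\<exists>p\<le>Suc k. m' = prefix_mask (Suc k) p)"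
    using Suc.IH[OF m'] \<open>m' \<noteq> []\<close> by (auto simp: m block_Suc hd_map)
  also have "\<dots> \<longleftrightarrow> (\<exists>p\<le>Suc (Suc k). m = prefix_mask (Suc (Suc k)) p)"
  proof
    assume A: "(x \<or> \<not> hd m') \<and> (\<exists>p\<le>Suc k. m' = prefix_mask (Suc k) p)"
    then obtain p where p: "p \<le> Suc k" "m' = prefix_mask (Suc k) p"
      by blast
    with A have "x \<or> p = 0"
      by simp
    then show "\<exists>p\<le>Suc (Suc k). m = prefix_mask (Suc (Suc k)) p"
    proof (cases x)
      case True
      then show ?thesis
        using p by (intro exI[of _ "Suc p"]) (simp add: m)
    next
      case False
      then show ?thesis
        using p \<open>x \<or> p = 0\<close> by (intro exI[of _ 0]) (simp add: m)
    qed
  next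
    assume "\<exists>p\<le>Suc (Suc k). m = prefix_mask (Suc (Suc k)) p"
    then obtain p where "p \<le> Suc (Suc k)" "m = prefix_mask (Suc (Suc k)) p"
      by blast
    then show "(x \<or> \<not> hd m') \<and> (\<exists>p\<le>Suc k. m' = prefix_mask (Suc k) p)"
      by (cases p) (auto simp: m prefix_mask_Suc[of "Suc k"] prefix_mask_Suc[of k])
  qed
  finally show ?case .
qed

lemma sum_masks_Not_block:
  "(\<Sum>m | length m = Suc k. if exits_in (\<lambda>b. b) (map Not m) (block k) then F m else 0)
    = (\<Sum>p\<le>Suc k. F (prefix_mask (Suc k) p))"
proof -
  have "{m. length m = Suc k \<and> exits_in (\<lambda>b. b) (map Not m) (block k)} = prefix_mask (Suc k) ` {..Suc k}"
    using exits_in_Not_block_iff by auto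
  then show ?thesis
    by (simp add: sum.inter_filter[symmetric] sum.reindex[OF inj_on_prefix_mask])
qed

lemma exits_in_prefix_mask_block:
  assumes "p \<le> Suc k"
  shows "exits_in (\<lambda>b. b) (prefix_mask (Suc k) p) (block k) \<longleftrightarrow> p = 0 \<or> p = Suc k"
proof (cases "p = 0 \<or> p = Suc k")
  case True
  then show ?thesis
    by (auto simp: prefix_mask_def simp del: replicate_Suc)
next
  case False
  then have "Suc (p - 1) < Suc k" "prefix_mask (Suc k) p ! (p - 1)" "\<not> prefix_mask (Suc k) p ! Suc (p - 1)"
      "\<not> block k ! (p - 1)"
    using assms by (auto simp: prefix_mask_def nth_append block_def)
  then show ?thesis
    using False assms by (subst exits_in_conv_nth) auto
qed

lemma mask_restrict_prefix_mask_block: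
  "p \<le> Suc k \<Longrightarrow> mask_restrict (prefix_mask (Suc k) p) (block k) = part_code p"
proof (induction k arbitrary: p)
  case 0
  then show ?case
    by (auto simp: prefix_mask_def block_def part_code_def le_Suc_eq)
next
  case (Suc k)
  then show ?case
    by (cases p) (auto simp: block_Suc part_code_Suc simp del: replicate_Suc)
qed

lemma mask_restrict_Not_prefix_mask_block:
  "p \<le> Suc k \<Longrightarrow> mask_restrict (map Not (prefix_mask (Suc k) p)) (block k) = part_code (Suc k - p)"
proof (induction k arbitrary: p)
  case 0
  then show ?case
    by (auto simp: prefix_mask_def block_def part_code_def le_Suc_eq)
next
  case (Suc k)
  show ?case
  proof (cases p)
    case 0
    then show ?thesis
      using mask_restrict_replicate_True[of "block (Suc k)"]
      by (simp add: map_replicate part_code_def del: replicate_Suc)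
  next
    case (Suc q)
    then show ?thesis
      using Suc.IH[of q] Suc.prems by (simp add: block_Suc)
  qed
qed

lemma sum_atMost_Suc_endpoints:
  "(\<Sum>p\<le>Suc k. if p = 0 \<or> p = Suc k then f p else 0) = f 0 + f (Suc k)"
proof -
  have "{..Suc k} \<inter> {p. p = 0 \<or> p = Suc k} = {0, Suc k}"
    by auto
  then show ?thesis
    by (simp add: sum.inter_filter[symmetric])
qed

lemma sum_masks_vanish_by_first_block:
  fixes F :: "bool list \<Rightarrow> 'v :: comm_monoid_add"
  assumes c: "c = block k @ c'"
    and inner: "\<And>m2. length m2 = length c' \<Longrightarrow> (\<Sum>m1 | length m1 = Suc k. F (m1 @ m2)) = 0"
  shows "(\<Sum>m | length m = length c. F m) = 0"
proof -
  have "length c = Suc k + length c'"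
    by (simp add: c)
  then have "(\<Sum>m | length m = length c. F m)
      = (\<Sum>m1 | length m1 = Suc k. \<Sum>m2 | length m2 = length c'. F (m1 @ m2))"
    by (simp only: sum_lists_append)
  also have "\<dots> = (\<Sum>m2 | length m2 = length c'. \<Sum>m1 | length m1 = Suc k. F (m1 @ m2))"
    by (rule sum.swap)
  also have "\<dots> = 0"
    using inner by simp
  finally show ?thesis .
qed

text \<open>The recursion for the first formula: on the first block of \<open>c\<close> only the two constant masks
  contribute, and their terms cancel.\<close>
lemma reverse_blocks_mask_sum:
  fixes g :: "bool list \<Rightarrow> 'v :: comm_ring_1"
  assumes "c \<noteq> []" "last c"
  shows "(\<Sum>m | length m = length c.
            if exits_in (\<lambda>b. b) m c \<and> exits_in (\<lambda>b. b) (map Not m) c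
            then (-1) ^ count_list (mask_restrict m c) True
                   * g (reverse_blocks (mask_restrict m c) @ mask_restrict (map Not m) c)
            else 0) = 0"
    (is "(\<Sum>m | length m = length c. ?F m) = 0")
proof -
  obtain k c' where c: "c = block k @ c'" and c': "c' = [] \<or> last c'"
    using split_first_block[OF assms] .
  have inner: "(\<Sum>m1 | length m1 = Suc k. ?F (m1 @ m2)) = 0" if m2: "length m2 = length c'" for m2
  proof (cases "exits_in (\<lambda>b. b) m2 c' \<and> exits_in (\<lambda>b. b) (map Not m2) c'")
    case True
    define X where "X = mask_restrict m2 c'"
    define X' where "X' = mask_restrict (map Not m2) c'"
    define G where "G m1 = (if exits_in (\<lambda>b. b) m1 (block k)
        then (-1) ^ count_list (mask_restrict m1 (block k) @ X) True
          * g (reverse_blocks (mask_restrict m1 (block k) @ X) @ mask_restrict (map Not m1) (block k) @ X')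
        else 0)" for m1
    have X: "X = [] \<or> last X"
      unfolding X_def using m2 by (rule mask_restrict_ends_True)
    have "?F (m1 @ m2) = (if exits_in (\<lambda>b. b) (map Not m1) (block k) then G m1 else 0)"
      if "length m1 = Suc k" for m1
      using that m2 True by (simp add: c X_def X'_def G_def mask_restrict_append exits_in_append)
    then have "(\<Sum>m1 | length m1 = Suc k. ?F (m1 @ m2))
        = (\<Sum>m1 | length m1 = Suc k. if exits_in (\<lambda>b. b) (map Not m1) (block k) then G m1 else 0)"
      by (intro sum.cong) auto
    also have "\<dots> = (\<Sum>p\<le>Suc k. G (prefix_mask (Suc k) p))"
      by (rule sum_masks_Not_block)
    also have "\<dots> = (\<Sum>p\<le>Suc k. if p = 0 \<or> p = Suc k
        then (-1) ^ count_list (part_code p @ X) True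
          * g (reverse_blocks (part_code p @ X) @ part_code (Suc k - p) @ X')
        else 0)"
      by (intro sum.cong) (simp_all add: G_def exits_in_prefix_mask_block
          mask_restrict_prefix_mask_block mask_restrict_Not_prefix_mask_block)
    also have "\<dots> = 0"
      using X by (simp add: sum_atMost_Suc_endpoints part_code_def reverse_blocks_append)
    finally show ?thesis .
  next
    case False
    then show ?thesis
      using m2 by (intro sum.neutral) (auto simp: c mask_restrict_append exits_in_append)
  qed
  show ?thesis
    using c inner by (rule sum_masks_vanish_by_first_block)
qed

lemma alternating_sum_refinements_blocks:
  fixes g :: "bool list \<Rightarrow> 'v :: comm_ring_1"
  assumes X: "X = [] \<or> last X"
  shows "(\<Sum>p\<le>Suc k. \<Sum>Y\<in>refinements (reverse_blocks (part_code p @ X)).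
    (-1) ^ count_list Y True * g (Y @ part_code (Suc k - p) @ X')) = 0"
proof -
  have "(\<Sum>p\<le>Suc k. \<Sum>Y\<in>refinements (reverse_blocks (part_code p @ X)).
        (-1) ^ count_list Y True * g (Y @ part_code (Suc k - p) @ X'))
      = (\<Sum>p\<le>Suc k. \<Sum>Y1\<in>refinements (reverse_blocks X). \<Sum>Y2\<in>refinements (part_code p).
        (-1) ^ count_list Y1 True * ((-1) ^ count_list Y2 True * g (Y1 @ Y2 @ part_code (Suc k - p) @ X')))"
    using X part_code_ends_True
    by (simp add: reverse_blocks_append sum_refinements_append power_add mult.assoc)
  also have "\<dots> = (\<Sum>Y1\<in>refinements (reverse_blocks X). \<Sum>p\<le>Suc k. \<Sum>Y2\<in>refinements (part_code p).
        (-1) ^ count_list Y1 True * ((-1) ^ count_list Y2 True * g (Y1 @ Y2 @ part_code (Suc k - p) @ X')))"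
    by (rule sum.swap)
  also have "\<dots> = (\<Sum>Y1\<in>refinements (reverse_blocks X). (-1) ^ count_list Y1 True *
        (\<Sum>p\<le>Suc k. \<Sum>Y2\<in>refinements (part_code p).
          (-1) ^ count_list Y2 True * g (Y1 @ Y2 @ part_code (Suc k - p) @ X')))"
    by (simp only: sum_distrib_left)
  also have "\<dots> = 0"
    using alternating_sum_part_codes[of "Suc k" "\<lambda>Z. g (Y1 @ Z @ X')" for Y1] by simp
  finally show ?thesis .
qed

text \<open>The recursion for the second formula: on the first block of \<open>c\<close> only the initial segments
  contribute.\<close>
lemma refinements_mask_sum:
  fixes g :: "bool list \<Rightarrow> 'v :: comm_ring_1"
  assumes "c \<noteq> []" "last c"
  shows "(\<Sum>m | length m = length c.
            if exits_in (\<lambda>b. b) (map Not m) c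
            then (\<Sum>Y\<in>refinements (reverse_blocks (mask_restrict m c)).
                    (-1) ^ count_list Y True * g (Y @ mask_restrict (map Not m) c))
            else 0) = 0"
    (is "(\<Sum>m | length m = length c. ?F m) = 0")
proof -
  obtain k c' where c: "c = block k @ c'" and c': "c' = [] \<or> last c'"
    using split_first_block[OF assms] .
  have inner: "(\<Sum>m1 | length m1 = Suc k. ?F (m1 @ m2)) = 0" if m2: "length m2 = length c'" for m2
  proof (cases "exits_in (\<lambda>b. b) (map Not m2) c'")
    case True
    define X where "X = mask_restrict m2 c'"
    define X' where "X' = mask_restrict (map Not m2) c'"
    define G where "G m1 = (\<Sum>Y\<in>refinements (reverse_blocks (mask_restrict m1 (block k) @ X)).
        (-1) ^ count_list Y True * g (Y @ mask_restrict (map Not m1) (block k) @ X'))" for m1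
    have X: "X = [] \<or> last X"
      unfolding X_def using m2 by (rule mask_restrict_ends_True)
    have "?F (m1 @ m2) = (if exits_in (\<lambda>b. b) (map Not m1) (block k) then G m1 else 0)"
      if "length m1 = Suc k" for m1
      using that m2 True by (simp add: c X_def X'_def G_def mask_restrict_append exits_in_append)
    then have "(\<Sum>m1 | length m1 = Suc k. ?F (m1 @ m2))
        = (\<Sum>m1 | length m1 = Suc k. if exits_in (\<lambda>b. b) (map Not m1) (block k) then G m1 else 0)"
      by (intro sum.cong) auto
    also have "\<dots> = (\<Sum>p\<le>Suc k. G (prefix_mask (Suc k) p))"
      by (rule sum_masks_Not_block)
    also have "\<dots> = (\<Sum>p\<le>Suc k. \<Sum>Y\<in>refinements (reverse_blocks (part_code p @ X)).
        (-1) ^ count_list Y True * g (Y @ part_code (Suc k - p) @ X'))"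
      by (intro sum.cong) (simp_all add: G_def mask_restrict_prefix_mask_block mask_restrict_Not_prefix_mask_block)
    also have "\<dots> = 0"
      using X by (rule alternating_sum_refinements_blocks)
    finally show ?thesis .
  next
    case False
    then show ?thesis
      using m2 by (intro sum.neutral) (auto simp: c mask_restrict_append exits_in_append)
  qed
  show ?thesis
    using c inner by (rule sum_masks_vanish_by_first_block)
qed

section \<open>Pure tensors\<close>

lemma sum_apply: "(\<Sum>x\<in>A. f x) z = (\<Sum>x\<in>A. f x z)"
  by (induction A rule: infinite_finite_induct) auto

lemma sum_if_apply: "(\<Sum>x\<in>A. if P x then f x else 0) z = (\<Sum>x\<in>A. if P x then f x z else 0)"
  unfolding sum_apply by (rule sum.cong) auto

lemma scale_apply: "scale c f x = c * f x"
  by (simp add: scale_def)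

lemma scale_0 [simp]: "scale 0 f = 0"
  and scale_1 [simp]: "scale 1 f = f"
  by (simp_all add: scale_def func_zero)

lemma hmult_chi_empty_right [simp]: "hmult G \<iota> f chi_empty = f"
  and hmult_chi_empty_left [simp]: "hmult G \<iota> chi_empty f = f"
  by (auto simp: hmult_def chi_empty_def fun_eq_iff intro!: sum.neutral)

lemma hmult_zero_left [simp]: "hmult G \<iota> 0 h = 0"
  by (simp add: hmult_def fun_eq_iff)

lemma hmult_zero_right [simp]: "hmult G \<iota> f 0 = 0"
  by (simp add: hmult_def fun_eq_iff)

lemma hmult_scale_left: "hmult G \<iota> (scale c f) h = scale c (hmult G \<iota> f h)"
  by (auto simp: hmult_def scale_def fun_eq_iff sum_distrib_left algebra_simps)

lemma hmult_sum_left: "hmult G \<iota> (\<Sum>Y\<in>R. f Y) h = (\<Sum>Y\<in>R. hmult G \<iota> (f Y) h)"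
  by (auto simp: fun_eq_iff hmult_def sum_apply sum.distrib sum_distrib_left sum_distrib_right
      sum.swap[where A = R])

lemma tens_Nil [simp]: "tens G \<psi>s [] = 0"
  by (simp add: tens_def)

lemma prod_lessThan_add:
  fixes f :: "nat \<Rightarrow> 'c :: comm_monoid_mult"
  shows "(\<Prod>j<a + b. f j) = (\<Prod>j<a. f j) * (\<Prod>j<b. f (a + j))"
  by (induction b) (simp_all add: mult.assoc)

lemma tens_concat:
  assumes \<iota>: "\<forall>g. g \<notin> carrier G \<longrightarrow> \<iota> g = 0" and one: "\<one>\<^bsub>G\<^esub> \<in> carrier G"
    and us: "length us = length xs"
  shows "tens G xs (us @ [\<one>\<^bsub>G\<^esub>]) * \<iota> z * tens G ys vs = tens G (xs @ [\<iota>] @ ys) (us @ z # vs)"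
proof (cases "z \<in> carrier G \<and> length vs = Suc (length ys) \<and> set us \<subseteq> carrier G
    \<and> set vs \<subseteq> carrier G \<and> last vs = \<one>\<^bsub>G\<^esub>")
  case True
  let ?F = "\<lambda>j. ((xs @ [\<iota>] @ ys) ! j) ((us @ z # vs) ! j)"
  have "(\<Prod>j<length xs + Suc (length ys). ?F j)
      = (\<Prod>j<length xs. ?F j) * (\<Prod>j<Suc (length ys). ?F (length xs + j))"
    by (rule prod_lessThan_add)
  also have "(\<Prod>j<length xs. ?F j) = (\<Prod>j<length xs. (xs ! j) (us ! j))"
    using us by (intro prod.cong) (auto simp: nth_append)
  also have "(\<Prod>j<Suc (length ys). ?F (length xs + j)) = \<iota> z * (\<Prod>j<length ys. (ys ! j) (vs ! j))"
    using us by (simp only: prod.lessThan_Suc_shift) (simp add: nth_append)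
  finally have "(\<Prod>j<length xs + Suc (length ys). ?F j)
      = (\<Prod>j<length xs. (xs ! j) (us ! j)) * \<iota> z * (\<Prod>j<length ys. (ys ! j) (vs ! j))"
    by (simp only: mult.assoc)
  then show ?thesis
    using True one us by (auto simp: tens_def nth_append)
next
  case False
  with \<iota> one us show ?thesis
    by (auto simp: tens_def)
qed

lemma hmult_tens:
  assumes \<iota>: "\<forall>g. g \<notin> carrier G \<longrightarrow> \<iota> g = 0" and one: "\<one>\<^bsub>G\<^esub> \<in> carrier G"
  shows "hmult G \<iota> (tens G xs) (tens G ys) = tens G (xs @ [\<iota>] @ ys)"
proof (rule ext)
  fix zs
  define a where "a = length xs"
  define T where "T = tens G xs (take a zs @ [\<one>\<^bsub>G\<^esub>]) * \<iota> (zs ! a) * tens G ys (drop (Suc a) zs)"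
  have "tens G xs (take j zs @ [\<one>\<^bsub>G\<^esub>]) = 0" if "j \<noteq> a" "j < length zs" for j
    using that by (simp add: tens_def a_def)
  then have "(\<Sum>j<length zs - 1. tens G xs (take j zs @ [\<one>\<^bsub>G\<^esub>]) * \<iota> (zs ! j) * tens G ys (drop (Suc j) zs))
      = (\<Sum>j<length zs - 1. if j = a then T else 0)"
    by (intro sum.cong) (auto simp: T_def)
  then have hmult: "hmult G \<iota> (tens G xs) (tens G ys) zs = (if a < length zs - 1 then T else 0)"
    by (simp add: hmult_def)
  show "hmult G \<iota> (tens G xs) (tens G ys) zs = tens G (xs @ [\<iota>] @ ys) zs"
  proof (cases "a < length zs - 1")
    case True
    have "T = tens G (xs @ [\<iota>] @ ys) (take a zs @ zs ! a # drop (Suc a) zs)"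
      unfolding T_def using \<iota> one by (rule tens_concat) (use True in \<open>simp add: a_def\<close>)
    then show ?thesis
      using True hmult by (simp add: id_take_nth_drop[symmetric])
  next
    case False
    then have "length zs \<noteq> Suc (length (xs @ [\<iota>] @ ys))"
      by (simp add: a_def)
    then show ?thesis
      using False hmult by (simp add: tens_def)
  qed
qed

lemma scf_vanishes_outside_carrier:
  assumes "group G" "\<psi> \<in> scf G" "g \<notin> carrier G"
  shows "\<psi> g = 0"
proof -
  have "\<one>\<^bsub>G\<^esub> \<in> carrier G"
    using assms(1) by (simp add: group.is_monoid monoid.one_closed)
  then show ?thesis
    using assms(2,3) by (auto simp: scf_def sc_one_def sc_reg_def)
qed

text \<open>The pure tensor \<open>L(X\<^sub>1) \<otimes> \<dots> \<otimes> L(X\<^bsub>n-1\<^esub>) \<otimes> \<chi>\<^sup>()\<close> for \<open>n = length X\<close>; the last entry of a code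
  is always \<open>True\<close> and carries no factor.\<close>
definition tens_code :: "('a, 'b) monoid_scheme \<Rightarrow> (bool \<Rightarrow> 'a \<Rightarrow> complex) \<Rightarrow> bool list \<Rightarrow> 'a list \<Rightarrow> complex"
  where "tens_code G L X = (if X = [] then chi_empty else tens G (map L (butlast X)))"

lemma tens_code_Nil [simp]: "tens_code G L [] = chi_empty"
  by (simp add: tens_code_def)

lemma hmult_tens_code:
  assumes G: "group G" and L: "L True \<in> scf G" and "X = [] \<or> last X" "Y = [] \<or> last Y"
  shows "hmult G (L True) (tens_code G L X) (tens_code G L Y) = tens_code G L (X @ Y)"
proof (cases "X = [] \<or> Y = []")
  case False
  then have "butlast (X @ Y) = butlast X @ [True] @ butlast Y"
    using assms(3) by (simp add: butlast_append) (metis append_butlast_last_id)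
  moreover have "\<forall>g. g \<notin> carrier G \<longrightarrow> L True g = 0"
    using scf_vanishes_outside_carrier[OF G L] by blast
  moreover have "\<one>\<^bsub>G\<^esub> \<in> carrier G"
    using G by (simp add: group.is_monoid monoid.one_closed)
  ultimately show ?thesis
    using False hmult_tens by (simp add: tens_code_def del: append_assoc)
qed auto

section \<open>Pieces of pure tensors\<close>

definition mask_set :: "bool list \<Rightarrow> nat set" where
  "mask_set m = {j \<in> {1..length m}. m ! (j - 1)}"

lemma sum_Pow_masks: "(\<Sum>A\<in>Pow {1..n}. F A) = (\<Sum>m | length m = n. F (mask_set m))"
proof -
  have "bij_betw mask_set {m. length m = n} (Pow {1..n})"
  proof (rule bij_betw_byWitness[where f' = "\<lambda>A. map (\<lambda>i. Suc i \<in> A) [0..<n]"])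
    show "\<forall>A\<in>Pow {1..n}. mask_set (map (\<lambda>i. Suc i \<in> A) [0..<n]) = A"
    proof
      fix A assume "A \<in> Pow {1..n}"
      have "map (\<lambda>i. Suc i \<in> A) [0..<n] ! (x - 1) \<longleftrightarrow> x \<in> A" if "1 \<le> x" "x \<le> n" for x
        using that by (cases x) auto
      then have "mask_set (map (\<lambda>i. Suc i \<in> A) [0..<n]) = {x \<in> {1..n}. x \<in> A}"
        by (auto simp: mask_set_def)
      also have "\<dots> = A"
        using \<open>A \<in> Pow {1..n}\<close> by auto
      finally show "mask_set (map (\<lambda>i. Suc i \<in> A) [0..<n]) = A" .
    qed
    show "\<forall>m\<in>{m. length m = n}. map (\<lambda>i. Suc i \<in> mask_set m) [0..<n] = m"
      by (auto simp: mask_set_def intro: nth_equalityI)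
  qed (auto simp: mask_set_def)
  then show ?thesis
    by (simp add: sum.reindex_bij_betw)
qed

lemma diff_mask_set: "length m = n \<Longrightarrow> {1..n} - mask_set m = mask_set (map Not m)"
  by (auto simp: mask_set_def)

lemma filter_nth_Cons_upt:
  "filter (nth (x # m)) [0..<length (x # m)] = (if x then [0] else []) @ map Suc (filter (nth m) [0..<length m])"
proof -
  have "[0..<length (x # m)] = 0 # map Suc [0..<length m]"
    by (simp only: length_Cons upt_conv_Cons[OF zero_less_Suc] map_Suc_upt)
  then show ?thesis
    by (simp add: filter_map comp_def)
qed

lemma mask_restrict_conv_filter:
  "length m = length c \<Longrightarrow>
    mask_restrict m c = map (\<lambda>i. (Suc i < length m \<and> m ! Suc i) \<longrightarrow> c ! i) (filter (nth m) [0..<length m])"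
proof (induction m c rule: mask_restrict.induct)
  case (1 x m b c)
  have "(m \<noteq> [] \<and> hd m) \<longleftrightarrow> (0 < length m \<and> m ! 0)"
    by (cases m) auto
  with 1 show ?case
    unfolding filter_nth_Cons_upt by (simp add: comp_def del: upt_Suc)
qed auto

lemma sorted_wrt_filter_upt: "sorted_wrt (<) (filter P [0..<n])"
  by (rule sorted_wrt_filter) simp

lemma sorted_list_of_mask_set:
  "sorted_list_of_set (mask_set m) = map Suc (filter (nth m) [0..<length m])"
proof -
  have "mask_set m = set (map Suc (filter (nth m) [0..<length m]))"
  proof (intro equalityI subsetI)
    fix x assume "x \<in> mask_set m"
    then have "x = Suc (x - 1)" "x - 1 < length m" "m ! (x - 1)"
      by (auto simp: mask_set_def)
    then show "x \<in> set (map Suc (filter (nth m) [0..<length m]))"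
      unfolding set_map by (intro image_eqI[of x Suc "x - 1"]) simp_all
  qed (auto simp: mask_set_def)
  moreover have "sorted_wrt (<) (map Suc (filter (nth m) [0..<length m]))"
    using sorted_wrt_filter_upt by (simp add: sorted_wrt_map)
  ultimately show ?thesis
    by (simp only: sorted_list_of_set_sort_remdups strict_sorted_iff distinct_remdups_id sorted_sort_id)
qed

lemma piece_mask_set_unfold:
  assumes fl: "fl = filter (nth m) [0..<length m]" and "fl \<noteq> []"
  shows "piece G \<iota> \<alpha> \<psi>s (mask_set m) =
    scale (if Suc (last fl) < Suc (length \<psi>s) then inner G (\<psi>s ! last fl) \<alpha> else 1)
      (tens G (map (\<lambda>i. if fl ! Suc i = Suc (fl ! i) then \<psi>s ! (fl ! i)
                        else (\<lambda>g. inner G (\<psi>s ! (fl ! i)) \<alpha> * \<iota> g)) [0..<length fl - 1]))"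
proof -
  obtain i where "i < length m" "m ! i"
    using assms by (auto simp: filter_empty_conv)
  then have "Suc i \<in> mask_set m"
    by (simp add: mask_set_def)
  then have "mask_set m \<noteq> {}"
    by blast
  then have unfolded: "piece G \<iota> \<alpha> \<psi>s (mask_set m) =
     (let as = map Suc fl; k = length as;
          xs = map (\<lambda>i. if as ! (Suc i) = Suc (as ! i) then \<psi>s ! (as ! i - 1)
                         else (\<lambda>g. inner G (\<psi>s ! (as ! i - 1)) \<alpha> * \<iota> g)) [0..<k - 1];
          lam = (if last as < Suc (length \<psi>s) then inner G (\<psi>s ! (last as - 1)) \<alpha> else 1)
      in scale lam (tens G xs))"
    unfolding piece_def sorted_list_of_mask_set fl[symmetric] by (rule if_not_P)
  have xs: "map (\<lambda>i. if map Suc fl ! Suc i = Suc (map Suc fl ! i) then \<psi>s ! (map Suc fl ! i - 1)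
        else (\<lambda>g. inner G (\<psi>s ! (map Suc fl ! i - 1)) \<alpha> * \<iota> g)) [0..<length fl - 1]
      = map (\<lambda>i. if fl ! Suc i = Suc (fl ! i) then \<psi>s ! (fl ! i)
        else (\<lambda>g. inner G (\<psi>s ! (fl ! i)) \<alpha> * \<iota> g)) [0..<length fl - 1]"
    by (rule map_cong) auto
  have last: "last (map Suc fl) = Suc (last fl)"
    using assms(2) by (simp add: last_map)
  show ?thesis
    by (simp only: unfolded Let_def length_map xs last diff_Suc_1)
qed

lemma sorted_wrt_less_nth_Suc_eq_iff:
  assumes "sorted_wrt (<) xs" "Suc i < length xs"
  shows "xs ! Suc i = Suc (xs ! i) \<longleftrightarrow> Suc (xs ! i) \<in> set xs"
proof
  assume "Suc (xs ! i) \<in> set xs"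
  then obtain j where j: "j < length xs" "xs ! j = Suc (xs ! i)"
    by (auto simp: in_set_conv_nth)
  have less: "a < b \<Longrightarrow> b < length xs \<Longrightarrow> xs ! a < xs ! b" for a b
    using assms(1) by (simp add: sorted_wrt_iff_nth_less)
  have "\<not> j < Suc i"
    using less[of j i] j assms(2) by (auto simp: less_Suc_eq)
  moreover have "\<not> Suc i < j"
    using less[of "Suc i" j] less[of i "Suc i"] j assms(2) by auto
  ultimately have "j = Suc i"
    by simp
  then show "xs ! Suc i = Suc (xs ! i)"
    using j by simp
qed (use assms(2) in \<open>metis nth_mem\<close>)

lemma sorted_le_last: "sorted xs \<Longrightarrow> x \<in> set xs \<Longrightarrow> x \<le> last xs"
  by (induction xs) (auto simp: last_ConsR)

lemma nth_filter_upt_Suc: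
  assumes "fl = filter P [0..<n]" "Suc i < length fl"
  shows "Suc (fl ! i) < n" "fl ! Suc i = Suc (fl ! i) \<longleftrightarrow> P (Suc (fl ! i))"
proof -
  have sorted: "sorted_wrt (<) fl"
    using assms(1) by (simp add: sorted_wrt_filter_upt)
  then have "fl ! i < fl ! Suc i"
    using assms(2) by (simp add: sorted_wrt_iff_nth_less)
  moreover have "fl ! Suc i < n"
    using assms nth_mem[OF assms(2)] by simp
  ultimately show "Suc (fl ! i) < n"
    by simp
  then show "fl ! Suc i = Suc (fl ! i) \<longleftrightarrow> P (Suc (fl ! i))"
    using sorted_wrt_less_nth_Suc_eq_iff[OF sorted assms(2)] assms(1) by simp
qed

lemma last_filter_upt_Suc:
  assumes "fl = filter P [0..<n]" "fl \<noteq> []" "Suc (last fl) < n"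
  shows "\<not> P (Suc (last fl))"
  using sorted_le_last[of fl "Suc (last fl)"] assms sorted_wrt_filter_upt[of P n]
  by (auto simp: strict_sorted_iff)

lemma tens_map_scaled:
  "tens G (map (\<lambda>i g. w i * f i g) [0..<N]) = scale (\<Prod>i<N. w i) (tens G (map f [0..<N]))"
  by (auto simp: tens_def scale_def fun_eq_iff prod.distrib)

lemma prod_of_bool: "finite A \<Longrightarrow> (\<Prod>x\<in>A. of_bool (Q x)) = (of_bool (\<forall>x\<in>A. Q x) :: 'c :: comm_semiring_1)"
  by (induction A rule: finite_induct) auto

text \<open>Since the pairings are \<open>0\<close> or \<open>1\<close>, a piece either vanishes or has the factor \<open>\<iota> = L True\<close> at the
  end of each run.\<close>
lemma piece_mask_set:
  fixes L :: "bool \<Rightarrow> 'a \<Rightarrow> complex"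
  assumes len: "length m = length c" and "c \<noteq> []"
    and inner: "\<And>b. inner G (L b) \<alpha> = of_bool (P b)"
  shows "piece G (L True) \<alpha> (map L (butlast c)) (mask_set m)
    = (if exits_in P m c then tens_code G L (mask_restrict m c) else 0)"
proof -
  define fl where "fl = filter (nth m) [0..<length m]"
  define k where "k = length fl"
  define E where "E j \<longleftrightarrow> Suc j < length m \<and> \<not> m ! Suc j" for j
  define w :: "nat \<Rightarrow> complex" where "w j = of_bool (E j \<longrightarrow> P (c ! j))" for j
  define r where "r j \<longleftrightarrow> ((Suc j < length m \<and> m ! Suc j) \<longrightarrow> c ! j)" for j
  have restrict: "mask_restrict m c = map r fl"
    unfolding r_def fl_def using len by (rule mask_restrict_conv_filter)
  have "exits_in P m c \<longleftrightarrow> (\<forall>j\<in>set fl. E j \<longrightarrow> P (c ! j))"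
    using len by (auto simp: exits_in_conv_nth E_def fl_def)
  then have exits: "exits_in P m c \<longleftrightarrow> (\<forall>i<k. E (fl ! i) \<longrightarrow> P (c ! (fl ! i)))"
    by (simp add: all_set_conv_all_nth k_def)
  show ?thesis
  proof (cases "fl = []")
    case True
    then show ?thesis
      using len exits by (simp add: k_def restrict piece_def mask_set_def fl_def filter_empty_conv)
  next
    case False
    then have k: "k = Suc (k - 1)" and last_fl: "last fl = fl ! (k - 1)"
      by (simp_all add: k_def last_conv_nth)
    have psi: "map L (butlast c) ! j = L (c ! j)" if "Suc j < length m" for j
      using that len by (simp add: nth_butlast)
    have factor: "(if fl ! Suc i = Suc (fl ! i) then map L (butlast c) ! (fl ! i)
          else (\<lambda>g. inner G (map L (butlast c) ! (fl ! i)) \<alpha> * L True g))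
        = (\<lambda>g. w (fl ! i) * L (r (fl ! i)) g)" if "i \<in> set [0..<k - 1]" for i
    proof -
      have i: "Suc i < length fl"
        using that k by (simp add: k_def)
      note succ = nth_filter_upt_Suc[OF fl_def i]
      show ?thesis
        using succ psi[OF succ(1)] by (cases "E (fl ! i)") (simp_all add: w_def r_def E_def inner)
    qed
    have "Suc (last fl) < length m \<Longrightarrow> \<not> m ! Suc (last fl)"
      using last_filter_upt_Suc[OF fl_def False] by simp
    then have lam: "(if Suc (last fl) < Suc (length (map L (butlast c)))
        then inner G (map L (butlast c) ! last fl) \<alpha> else 1) = w (last fl)"
      using len psi[of "last fl"] \<open>c \<noteq> []\<close> by (auto simp: w_def E_def inner)
    have weights: "w (last fl) * (\<Prod>i<k - 1. w (fl ! i)) = of_bool (exits_in P m c)"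
    proof -
      have "w (last fl) * (\<Prod>i<k - 1. w (fl ! i)) = (\<Prod>i<k. w (fl ! i))"
        by (subst k) (simp add: last_fl mult.commute)
      then show ?thesis
        by (auto simp: w_def prod_of_bool exits)
    qed
    have butlast: "map L (butlast (map r fl)) = map (\<lambda>i. L (r (fl ! i))) [0..<k - 1]"
      by (rule nth_equalityI) (simp_all add: k_def nth_butlast)
    have "piece G (L True) \<alpha> (map L (butlast c)) (mask_set m)
        = scale (w (last fl)) (tens G (map (\<lambda>i g. w (fl ! i) * L (r (fl ! i)) g) [0..<k - 1]))"
      unfolding piece_mask_set_unfold[OF fl_def False] by (simp only: lam factor k_def[symmetric] cong: map_cong)
    also have "\<dots> = scale (of_bool (exits_in P m c)) (tens_code G L (mask_restrict m c))"
      using False by (simp add: tens_map_scaled scale_def weights[symmetric] tens_code_def restrict butlast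
          mult.assoc)
    finally show ?thesis
      by (simp add: scale_def func_zero)
  qed
qed

section \<open>The antipode on pure tensors\<close>

lemma antipode_zero:
  assumes "is_antipode G \<iota> \<alpha> \<beta> S"
  shows "S 0 = 0"
proof -
  have "S (scale 0 chi_empty) = scale 0 (S chi_empty)"
    using assms Hspace.unit unfolding is_antipode_def by blast
  then show ?thesis
    by simp
qed

lemma antipode_mask_sum:
  assumes "is_antipode G \<iota> \<alpha> \<beta> S" and "set \<psi>s \<subseteq> scf G"
  shows "(\<Sum>m | length m = Suc (length \<psi>s).
    hmult G \<iota> (S (piece G \<iota> \<alpha> \<psi>s (mask_set m))) (piece G \<iota> \<beta> \<psi>s (mask_set (map Not m)))) = 0"
proof -
  have "0 = (\<Sum>A\<in>Pow {1..Suc (length \<psi>s)}.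
      hmult G \<iota> (S (piece G \<iota> \<alpha> \<psi>s A)) (piece G \<iota> \<beta> \<psi>s ({1..Suc (length \<psi>s)} - A)))"
    using assms unfolding is_antipode_def func_zero by simp
  also have "\<dots> = (\<Sum>m | length m = Suc (length \<psi>s).
      hmult G \<iota> (S (piece G \<iota> \<alpha> \<psi>s (mask_set m))) (piece G \<iota> \<beta> \<psi>s ({1..Suc (length \<psi>s)} - mask_set m)))"
    by (rule sum_Pow_masks)
  also have "\<dots> = (\<Sum>m | length m = Suc (length \<psi>s).
      hmult G \<iota> (S (piece G \<iota> \<alpha> \<psi>s (mask_set m))) (piece G \<iota> \<beta> \<psi>s (mask_set (map Not m))))"
    by (rule sum.cong) (simp_all only: diff_mask_set mem_Collect_eq)
  finally show ?thesis
    by simp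
qed

lemma antipode_recursion_tens_code:
  fixes L :: "bool \<Rightarrow> 'a \<Rightarrow> complex"
  assumes S: "is_antipode G (L True) \<alpha> \<beta> S"
    and L: "\<And>b. L b \<in> scf G"
    and \<alpha>: "\<And>b. inner G (L b) \<alpha> = of_bool (P b)"
    and \<beta>: "\<And>b. inner G (L b) \<beta> = of_bool (Q b)"
    and c: "c \<noteq> []"
  shows "(\<Sum>m | length m = length c.
      if exits_in P m c \<and> exits_in Q (map Not m) c
      then hmult G (L True) (S (tens_code G L (mask_restrict m c))) (tens_code G L (mask_restrict (map Not m) c))
      else 0) = 0" (is "?lhs = 0")
proof -
  define \<psi>s where "\<psi>s = map L (butlast c)"
  have "set \<psi>s \<subseteq> scf G"
    using L by (auto simp: \<psi>s_def)
  then have "(\<Sum>m | length m = Suc (length \<psi>s).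
      hmult G (L True) (S (piece G (L True) \<alpha> \<psi>s (mask_set m))) (piece G (L True) \<beta> \<psi>s (mask_set (map Not m))))
      = 0"
    by (rule antipode_mask_sum[OF S])
  moreover have "length c = Suc (length \<psi>s)"
    using c by (simp add: \<psi>s_def)
  ultimately have zero: "(\<Sum>m | length m = length c.
      hmult G (L True) (S (piece G (L True) \<alpha> \<psi>s (mask_set m))) (piece G (L True) \<beta> \<psi>s (mask_set (map Not m))))
      = 0"
    by simp
  have pieces: "hmult G (L True) (S (piece G (L True) \<alpha> \<psi>s (mask_set m)))
        (piece G (L True) \<beta> \<psi>s (mask_set (map Not m)))
      = (if exits_in P m c \<and> exits_in Q (map Not m) c
         then hmult G (L True) (S (tens_code G L (mask_restrict m c)))
           (tens_code G L (mask_restrict (map Not m) c))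
         else 0)" if "length m = length c" for m
  proof -
    have "piece G (L True) \<alpha> \<psi>s (mask_set m) = (if exits_in P m c then tens_code G L (mask_restrict m c) else 0)"
      unfolding \<psi>s_def using that c \<alpha> by (rule piece_mask_set)
    moreover have "piece G (L True) \<beta> \<psi>s (mask_set (map Not m))
        = (if exits_in Q (map Not m) c then tens_code G L (mask_restrict (map Not m) c) else 0)"
      unfolding \<psi>s_def using that c \<beta> by (intro piece_mask_set) simp_all
    ultimately show ?thesis
      using antipode_zero[OF S] by simp
  qed
  have "?lhs = (\<Sum>m | length m = length c.
      hmult G (L True) (S (piece G (L True) \<alpha> \<psi>s (mask_set m))) (piece G (L True) \<beta> \<psi>s (mask_set (map Not m))))"
    by (rule sum.cong) (simp_all add: pieces)
  also note zero
  finally show ?thesis .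
qed

lemma antipode_tens_code:
  fixes L :: "bool \<Rightarrow> 'a \<Rightarrow> complex" and T :: "bool list \<Rightarrow> 'a list \<Rightarrow> complex"
  assumes S: "is_antipode G (L True) \<alpha> \<beta> S"
    and L: "\<And>b. L b \<in> scf G"
    and \<alpha>: "\<And>b. inner G (L b) \<alpha> = of_bool (P b)"
    and \<beta>: "\<And>b. inner G (L b) \<beta> = of_bool (Q b)"
    and T_Nil: "T [] = chi_empty"
    and T_rec: "\<And>c. c \<noteq> [] \<Longrightarrow> last c \<Longrightarrow>
      (\<Sum>m | length m = length c.
        if exits_in P m c \<and> exits_in Q (map Not m) c
        then hmult G (L True) (T (mask_restrict m c)) (tens_code G L (mask_restrict (map Not m) c))
        else 0) = 0"
  shows "c \<noteq> [] \<Longrightarrow> last c \<Longrightarrow> S (tens_code G L c) = T c"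
proof (induction "length c" arbitrary: c rule: less_induct)
  case less
  define F where "F R m = (if exits_in P m c \<and> exits_in Q (map Not m) c
      then hmult G (L True) (R (mask_restrict m c)) (tens_code G L (mask_restrict (map Not m) c)) else 0)"
    for R m
  define M where "M = {m :: bool list. length m = length c}"
  define full where "full = replicate (length c) True"
  have full: "full \<in> M" "exits_in P full c" "exits_in Q (map Not full) c"
    by (simp_all add: M_def full_def map_replicate)
  have restrict_full: "mask_restrict full c = c" "mask_restrict (map Not full) c = []"
    using less.prems by (simp_all add: full_def mask_restrict_replicate_True map_replicate)
  have "F (\<lambda>X. S (tens_code G L X)) m = F T m" if "m \<in> M - {full}" for m
  proof -
    have "S (tens_code G L (mask_restrict m c)) = T (mask_restrict m c)"
    proof (cases "mask_restrict m c = []")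
      case True
      then show ?thesis
        using S T_Nil by (simp add: is_antipode_def)
    next
      case False
      then show ?thesis
        using that less.hyps last_mask_restrict length_mask_restrict_less by (simp add: M_def full_def)
    qed
    then show ?thesis
      by (simp add: F_def)
  qed
  then have others: "(\<Sum>m\<in>M - {full}. F (\<lambda>X. S (tens_code G L X)) m) = (\<Sum>m\<in>M - {full}. F T m)"
    by (rule sum.cong[OF refl])
  have remove: "sum f M = f full + sum f (M - {full})" for f :: "bool list \<Rightarrow> 'a list \<Rightarrow> complex"
    by (rule sum.remove) (simp_all add: M_def full_def)
  have "0 = (\<Sum>m\<in>M. F (\<lambda>X. S (tens_code G L X)) m)"
    using antipode_recursion_tens_code[where L = L, OF S L \<alpha> \<beta> less.prems(1)] by (simp add: F_def M_def)
  also have "\<dots> = S (tens_code G L c) + (\<Sum>m\<in>M - {full}. F T m)"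
    unfolding remove others using full restrict_full by (simp add: F_def)
  finally have "0 = S (tens_code G L c) + (\<Sum>m\<in>M - {full}. F T m)" .
  moreover have "0 = (\<Sum>m\<in>M. F T m)"
    using T_rec[OF less.prems] by (simp add: F_def M_def)
  then have "0 = T c + (\<Sum>m\<in>M - {full}. F T m)"
    unfolding remove using full restrict_full T_Nil by (simp add: F_def)
  ultimately show ?case
    by (metis add_right_cancel)
qed

section \<open>The supercharacter theory with superclasses 1 and G - 1\<close>

lemma sc_one_scf: "sc_one G \<in> scf G"
  unfolding scf_def by (rule CollectI, rule exI[of _ 1], rule exI[of _ 0]) simp

lemma sc_reg_scf: "sc_reg G \<in> scf G"
  unfolding scf_def by (rule CollectI, rule exI[of _ 0], rule exI[of _ 1]) simp

lemma sc_regm1_scf: "sc_regm1 G \<in> scf G"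
  unfolding scf_def sc_regm1_def by (rule CollectI, rule exI[of _ "-1"], rule exI[of _ 1]) simp

context
  fixes G :: "('a, 'b) monoid_scheme"
  assumes G: "group G" and fin: "finite (carrier G)" and card: "card (carrier G) \<ge> 2"
begin

lemma one_in_carrier: "\<one>\<^bsub>G\<^esub> \<in> carrier G"
  using G by (simp add: group.is_monoid monoid.one_closed)

lemma card_carrier_neq: "(of_nat (card (carrier G)) :: complex) \<noteq> 0" "(of_nat (card (carrier G)) :: complex) \<noteq> 1"
  using card by simp_all

lemma sum_sc_reg_mult: "(\<Sum>g\<in>carrier G. sc_reg G g * h g) = of_nat (card (carrier G)) * h \<one>\<^bsub>G\<^esub>"
proof -
  have "(\<Sum>g\<in>carrier G. sc_reg G g * h g)
      = (\<Sum>g\<in>carrier G. if g = \<one>\<^bsub>G\<^esub> then of_nat (card (carrier G)) * h g else 0)"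
    by (rule sum.cong) (auto simp: sc_reg_def)
  then show ?thesis
    using fin one_in_carrier by (simp add: sum.delta)
qed

lemma sum_sc_one: "(\<Sum>g\<in>carrier G. sc_one G g) = of_nat (card (carrier G))"
  by (simp add: sc_one_def)

lemma sum_sc_reg: "(\<Sum>g\<in>carrier G. sc_reg G g) = of_nat (card (carrier G))"
  using sum_sc_reg_mult[of "\<lambda>_. 1"] by simp

lemma inner_sc_one_sc_one: "inner G (sc_one G) (sc_one G) = 1"
  using card_carrier_neq by (simp add: inner_def sc_one_def)

lemma inner_sc_reg_sc_one: "inner G (sc_reg G) (sc_one G) = 1"
  using card_carrier_neq one_in_carrier by (simp add: inner_def sum_sc_reg_mult sum_sc_reg sc_one_def)

lemma inner_sc_regm1_sc_one: "inner G (sc_regm1 G) (sc_one G) = 0"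
proof -
  have "(\<Sum>g\<in>carrier G. sc_regm1 G g * cnj (sc_one G g)) = (\<Sum>g\<in>carrier G. sc_reg G g - sc_one G g)"
    by (rule sum.cong) (auto simp: sc_regm1_def sc_one_def)
  then show ?thesis
    by (simp add: inner_def sum_subtractf sum_sc_reg sum_sc_one)
qed

lemma sc_regm1_dual_one: "sc_regm1_dual G \<one>\<^bsub>G\<^esub> = 1"
  using card_carrier_neq one_in_carrier by (simp add: sc_regm1_dual_def sc_regm1_def sc_reg_def sc_one_def)

lemma inner_sc_reg_sc_regm1_dual: "inner G (sc_reg G) (sc_regm1_dual G) = 1"
  using card_carrier_neq by (simp add: inner_def sum_sc_reg_mult sc_regm1_dual_one)

lemma inner_sc_one_sc_regm1_dual: "inner G (sc_one G) (sc_regm1_dual G) = 0"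
proof -
  have "(\<Sum>g\<in>carrier G. sc_one G g * cnj (sc_regm1_dual G g))
      = (\<Sum>g\<in>carrier G. (sc_reg G g - sc_one G g) / (of_nat (card (carrier G)) - 1))"
    by (rule sum.cong) (auto simp: sc_one_def sc_regm1_dual_def sc_regm1_def sc_reg_def)
  then show ?thesis
    by (simp add: inner_def sum_subtractf sum_sc_reg sum_sc_one flip: sum_divide_distrib)
qed

end

definition chi_factor :: "('a, 'b) monoid_scheme \<Rightarrow> bool \<Rightarrow> 'a \<Rightarrow> complex" where
  "chi_factor G b = (if b then sc_one G else sc_regm1 G)"

definition ind_factor :: "('a, 'b) monoid_scheme \<Rightarrow> bool \<Rightarrow> 'a \<Rightarrow> complex" where
  "ind_factor G b = (if b then sc_reg G else sc_one G)"

lemma chi_factor_scf: "chi_factor G b \<in> scf G"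
  by (simp add: chi_factor_def sc_one_scf sc_regm1_scf)

lemma ind_factor_scf: "ind_factor G b \<in> scf G"
  by (simp add: ind_factor_def sc_one_scf sc_reg_scf)

lemma antipode_chi_code:
  fixes G :: "('a, 'b) monoid_scheme"
  assumes G: "group G" "finite (carrier G)" "card (carrier G) \<ge> 2"
    and S: "is_antipode G (sc_one G) (sc_one G) (sc_one G) S"
    and c: "c \<noteq> []" "last c"
  shows "S (tens_code G (chi_factor G) c)
    = scale ((-1) ^ count_list c True) (tens_code G (chi_factor G) (reverse_blocks c))"
proof -
  let ?L = "chi_factor G"
  define T where "T X = scale ((-1) ^ count_list X True) (tens_code G ?L (reverse_blocks X))" for X
  have S': "is_antipode G (?L True) (sc_one G) (sc_one G) S"
    using S by (simp add: chi_factor_def)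
  have inner_one: "inner G (?L b) (sc_one G) = of_bool b" for b
    using inner_sc_one_sc_one[OF G] inner_sc_regm1_sc_one[OF G] by (simp add: chi_factor_def)
  have T_mult: "hmult G (?L True) (T X) (tens_code G ?L X')
      = scale ((-1) ^ count_list X True) (tens_code G ?L (reverse_blocks X @ X'))"
    if "X' = [] \<or> last X'" for X X'
    using hmult_tens_code[where L = ?L, OF G(1) chi_factor_scf reverse_blocks_ends_True that]
    by (simp add: T_def hmult_scale_left)
  have rec: "(\<Sum>m | length m = length c'.
      if exits_in (\<lambda>b. b) m c' \<and> exits_in (\<lambda>b. b) (map Not m) c'
      then hmult G (?L True) (T (mask_restrict m c')) (tens_code G ?L (mask_restrict (map Not m) c'))
      else 0) = 0" (is "?lhs = 0") if "c' \<noteq> []" "last c'" for c'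
  proof (rule ext)
    fix zs
    have "?lhs zs = (\<Sum>m | length m = length c'.
        if exits_in (\<lambda>b. b) m c' \<and> exits_in (\<lambda>b. b) (map Not m) c'
        then (-1) ^ count_list (mask_restrict m c') True
          * tens_code G ?L (reverse_blocks (mask_restrict m c') @ mask_restrict (map Not m) c') zs
        else 0)"
      unfolding sum_if_apply by (intro sum.cong) (simp_all add: T_mult mask_restrict_ends_True scale_apply)
    also have "\<dots> = 0"
      by (rule reverse_blocks_mask_sum[OF that])
    finally show "?lhs zs = 0 zs"
      by simp
  qed
  have "T [] = chi_empty"
    by (simp add: T_def)
  from antipode_tens_code[OF S' chi_factor_scf inner_one inner_one this rec c]
  show ?thesis
    by (simp add: T_def)
qed

lemma antipode_ind_code:
  fixes G :: "('a, 'b) monoid_scheme"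
  assumes G: "group G" "finite (carrier G)" "card (carrier G) \<ge> 2"
    and S: "is_antipode G (sc_reg G) (sc_one G) (sc_regm1_dual G) S"
    and c: "c \<noteq> []" "last c"
  shows "S (tens_code G (ind_factor G) c) = (\<Sum>Y\<in>refinements (reverse_blocks c).
    scale ((-1) ^ count_list Y True) (tens_code G (ind_factor G) Y))"
proof -
  let ?L = "ind_factor G"
  define T where "T X = (\<Sum>Y\<in>refinements (reverse_blocks X).
    scale ((-1) ^ count_list Y True) (tens_code G ?L Y))" for X
  have S': "is_antipode G (?L True) (sc_one G) (sc_regm1_dual G) S"
    using S by (simp add: ind_factor_def)
  have inner_one: "inner G (?L b) (sc_one G) = of_bool True" for b
    using inner_sc_one_sc_one[OF G] inner_sc_reg_sc_one[OF G] by (simp add: ind_factor_def)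
  have inner_dual: "inner G (?L b) (sc_regm1_dual G) = of_bool b" for b
    using inner_sc_one_sc_regm1_dual[OF G] inner_sc_reg_sc_regm1_dual[OF G] by (simp add: ind_factor_def)
  have T_mult: "hmult G (?L True) (T X) (tens_code G ?L X')
      = (\<Sum>Y\<in>refinements (reverse_blocks X). scale ((-1) ^ count_list Y True) (tens_code G ?L (Y @ X')))"
    if "X' = [] \<or> last X'" for X X'
    unfolding T_def hmult_sum_left
  proof (rule sum.cong[OF refl])
    fix Y assume "Y \<in> refinements (reverse_blocks X)"
    then have "Y = [] \<or> last Y"
      using reverse_blocks_ends_True by (rule refinements_ends_True)
    then show "hmult G (?L True) (scale ((-1) ^ count_list Y True) (tens_code G ?L Y)) (tens_code G ?L X')
        = scale ((-1) ^ count_list Y True) (tens_code G ?L (Y @ X'))"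
      using hmult_tens_code[where L = ?L, OF G(1) ind_factor_scf _ that] by (simp add: hmult_scale_left)
  qed
  have rec: "(\<Sum>m | length m = length c'.
      if exits_in (\<lambda>_. True) m c' \<and> exits_in (\<lambda>b. b) (map Not m) c'
      then hmult G (?L True) (T (mask_restrict m c')) (tens_code G ?L (mask_restrict (map Not m) c'))
      else 0) = 0" (is "?lhs = 0") if "c' \<noteq> []" "last c'" for c'
  proof (rule ext)
    fix zs
    have "?lhs zs = (\<Sum>m | length m = length c'.
        if exits_in (\<lambda>b. b) (map Not m) c'
        then (\<Sum>Y\<in>refinements (reverse_blocks (mask_restrict m c')).
          (-1) ^ count_list Y True * tens_code G ?L (Y @ mask_restrict (map Not m) c') zs)
        else 0)"
      unfolding sum_if_apply
      by (intro sum.cong) (simp_all add: T_mult mask_restrict_ends_True sum_apply scale_apply)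
    also have "\<dots> = 0"
      by (rule refinements_mask_sum[OF that])
    finally show "?lhs zs = 0 zs"
      by simp
  qed
  have "T [] = chi_empty"
    by (simp add: T_def)
  from antipode_tens_code[OF S' ind_factor_scf inner_one inner_dual this rec c]
  show ?thesis
    by (simp add: T_def)
qed

section \<open>Compositions\<close>

lemma descents_Cons:
  "\<mu> \<noteq> [] \<Longrightarrow> descents (p # \<mu>) = insert p ((+) p ` descents \<mu>)"
proof (intro equalityI subsetI)
  fix x assume "x \<in> descents (p # \<mu>)"
  then obtain i where i: "1 \<le> i" "i < Suc (length \<mu>)" "x = sum_list (take i (p # \<mu>))"
    by (auto simp: descents_def)
  then obtain i' where "i = Suc i'"
    by (cases i) auto
  show "x \<in> insert p ((+) p ` descents \<mu>)"
  proof (cases "i' = 0")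
    case False
    then have "sum_list (take i' \<mu>) \<in> descents \<mu>"
      using i \<open>i = Suc i'\<close> by (auto simp: descents_def)
    then show ?thesis
      using i \<open>i = Suc i'\<close> by simp
  qed (use i \<open>i = Suc i'\<close> in simp)
next
  fix x assume x: "x \<in> insert p ((+) p ` descents \<mu>)"
  assume "\<mu> \<noteq> []"
  show "x \<in> descents (p # \<mu>)"
  proof (cases "x = p")
    case True
    then show ?thesis
      using \<open>\<mu> \<noteq> []\<close> unfolding descents_def by (intro CollectI exI[of _ 1]) auto
  next
    case False
    then obtain i where "1 \<le> i" "i < length \<mu>" "x = p + sum_list (take i \<mu>)"
      using x by (auto simp: descents_def)
    then show ?thesis
      unfolding descents_def by (intro CollectI exI[of _ "Suc i"]) auto
  qed
qed

lemma comp_code_conv_descents: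
  "0 \<notin> set \<mu> \<Longrightarrow> \<mu> \<noteq> [] \<Longrightarrow> comp_code \<mu> = map (\<lambda>j. j \<in> descents \<mu>) [1..<sum_list \<mu>] @ [True]"
proof (induction \<mu>)
  case (Cons p \<mu>)
  have p: "0 < p"
    using Cons.prems by auto
  have "descents (p # \<mu>) \<subseteq> {p..}"
    by (auto simp: descents_def Suc_le_eq take_Cons' elim!: less_natE)
  then have "map (\<lambda>j. j \<in> descents (p # \<mu>)) [1..<p] = map (\<lambda>j. False) [1..<p]"
    by (intro map_cong) auto
  then have below_p: "map (\<lambda>j. j \<in> descents (p # \<mu>)) [1..<p] = replicate (p - 1) False"
    by (simp add: map_replicate_const)
  show ?case
  proof (cases "\<mu> = []")
    case True
    then show ?thesis
      using p below_p by (simp add: part_code_def block_def)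
  next
    case False
    define s where "s = sum_list \<mu>"
    have "s \<noteq> 0"
      using False Cons.prems(1) by (cases \<mu>) (auto simp: s_def)
    have shift: "map ((+) p) [a..<b] = [p + a..<p + b]" for a b
      by (induction b) auto
    have "[1..<p + s] = [1..<p] @ [p..<p + s]"
      by (rule upt_add_eq_append) (use p in simp)
    also have "[p..<p + s] = p # map ((+) p) [1..<s]"
      using \<open>s \<noteq> 0\<close> by (simp add: shift upt_conv_Cons)
    finally have "[1..<p + s] = [1..<p] @ p # map ((+) p) [1..<s]" .
    moreover have "map (\<lambda>j. j \<in> descents (p # \<mu>)) (map ((+) p) [1..<s]) = map (\<lambda>j. j \<in> descents \<mu>) [1..<s]"
      using False by (auto simp: descents_Cons)
    ultimately have "map (\<lambda>j. j \<in> descents (p # \<mu>)) [1..<sum_list (p # \<mu>)]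
        = replicate (p - 1) False @ True # map (\<lambda>j. j \<in> descents \<mu>) [1..<s]"
      using False below_p by (simp add: s_def descents_Cons)
    then show ?thesis
      using Cons.IH Cons.prems False p by (simp add: s_def part_code_def block_def)
  qed
qed simp

lemma is_composition_iff: "is_composition n \<mu> \<longleftrightarrow> 0 \<notin> set \<mu> \<and> sum_list \<mu> = n"
  by (auto simp: is_composition_def) (metis gr0I)

lemma butlast_comp_code:
  assumes "is_composition n \<mu>" "n \<ge> 1"
  shows "comp_code \<mu> \<noteq> []" "butlast (comp_code \<mu>) = map (\<lambda>j. j \<in> descents \<mu>) [1..<n]"
proof -
  have "0 \<notin> set \<mu>" "sum_list \<mu> = n" "\<mu> \<noteq> []"
    using assms by (auto simp: is_composition_iff)
  then show "comp_code \<mu> \<noteq> []" "butlast (comp_code \<mu>) = map (\<lambda>j. j \<in> descents \<mu>) [1..<n]"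
    by (simp_all add: comp_code_conv_descents)
qed

lemma comp_code_nonempty_last:
  assumes "is_composition n \<mu>" "n \<ge> 1"
  shows "comp_code \<mu> \<noteq> []" "last (comp_code \<mu>)"
  using butlast_comp_code(1)[OF assms] comp_code_ends_True[of \<mu>] by auto

lemma chi_bn0_eq_tens_code:
  "is_composition n \<mu> \<Longrightarrow> n \<ge> 1 \<Longrightarrow> chi_bn0 G n \<mu> = tens_code G (chi_factor G) (comp_code \<mu>)"
  by (simp add: chi_bn0_def tens_code_def butlast_comp_code chi_factor_def comp_def)

lemma ind_bn1_eq_tens_code:
  "is_composition n \<mu> \<Longrightarrow> n \<ge> 1 \<Longrightarrow> ind_bn1 G n \<mu> = tens_code G (ind_factor G) (comp_code \<mu>)"
  by (simp add: ind_bn1_def tens_code_def butlast_comp_code ind_factor_def comp_def)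

lemma hprod_chi_bn0:
  assumes "group G" "0 \<notin> set \<nu>"
  shows "hprod G (sc_one G) (map (\<lambda>m. chi_bn0 G m [m]) \<nu>) = tens_code G (chi_factor G) (comp_code \<nu>)"
  using assms(2)
proof (induction \<nu>)
  case (Cons p \<nu>)
  then have "chi_bn0 G p [p] = tens_code G (chi_factor G) (comp_code [p])"
    by (intro chi_bn0_eq_tens_code) (auto simp: is_composition_iff)
  then show ?case
    using Cons hmult_tens_code[where L = "chi_factor G", OF assms(1) chi_factor_scf part_code_ends_True
        comp_code_ends_True]
    by (simp add: hprod_def chi_factor_def[of G True])
qed (simp add: hprod_def)

lemma refinements_part_code:
  assumes "0 < l"
  shows "refinements (part_code l) = comp_code ` {\<nu>. 0 \<notin> set \<nu> \<and> sum_list \<nu> = l}"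
proof -
  have "Y \<in> refinements (part_code l) \<longleftrightarrow> (\<exists>Y'. Y = Y' @ [True] \<and> length Y' = l - 1)" for Y
    using assms by (auto simp: part_code_def block_def refinements_append refinements_replicate_False)
  also have "(\<exists>Y'. Y = Y' @ [True] \<and> length Y' = l - 1) \<longleftrightarrow> length Y = l \<and> last Y" for Y
  proof
    assume Y: "length Y = l \<and> last Y"
    then have "Y \<noteq> []"
      using assms by auto
    then have "Y = butlast Y @ [True]"
      using append_butlast_last_id[of Y] Y by simp
    then show "\<exists>Y'. Y = Y' @ [True] \<and> length Y' = l - 1"
      using Y by (intro exI[of _ "butlast Y"]) simp
  qed (use assms in auto)
  finally have "refinements (part_code l) = {Y. length Y = l \<and> last Y}"
    by blast
  also have "\<dots> = comp_code ` {\<nu>. 0 \<notin> set \<nu> \<and> sum_list \<nu> = l}"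
  proof (intro equalityI subsetI)
    fix Y assume "Y \<in> {Y. length Y = l \<and> last Y}"
    then show "Y \<in> comp_code ` {\<nu>. 0 \<notin> set \<nu> \<and> sum_list \<nu> = l}"
      using ex_comp_code[of Y] by force
  next
    fix Y assume "Y \<in> comp_code ` {\<nu>. 0 \<notin> set \<nu> \<and> sum_list \<nu> = l}"
    then obtain \<nu> where "Y = comp_code \<nu>" "sum_list \<nu> = l"
      by blast
    moreover have "length (comp_code \<nu>) = l"
      using \<open>sum_list \<nu> = l\<close> by simp
    ultimately show "Y \<in> {Y. length Y = l \<and> last Y}"
      using assms comp_code_ends_True[of \<nu>] by (cases "comp_code \<nu> = []") auto
  qed
  finally show ?thesis .
qed

lemma refines_Nil_right [simp]: "refines \<nu> [] \<longleftrightarrow> \<nu> = []"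
  by (auto simp: refines_def)

lemma refines_Cons_right:
  "refines \<nu> (l # \<rho>) \<longleftrightarrow> (\<exists>\<nu>1 \<nu>2. \<nu> = \<nu>1 @ \<nu>2 \<and> \<nu>1 \<noteq> [] \<and> sum_list \<nu>1 = l \<and> refines \<nu>2 \<rho>)"
    (is "?lhs \<longleftrightarrow> ?rhs")
proof
  assume ?lhs
  then obtain bs where bs: "concat bs = \<nu> \<and> (\<forall>b\<in>set bs. b \<noteq> []) \<and> map sum_list bs = l # \<rho>"
    unfolding refines_def ..
  then obtain b bs' where "bs = b # bs'"
    by (cases bs) auto
  with bs show ?rhs
    unfolding refines_def by (intro exI[of _ b] exI[of _ "concat bs'"]) auto
next
  assume ?rhs
  then obtain \<nu>1 \<nu>2 where \<nu>: "\<nu> = \<nu>1 @ \<nu>2" "\<nu>1 \<noteq> []" "sum_list \<nu>1 = l" "refines \<nu>2 \<rho>"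
    by blast
  from \<open>refines \<nu>2 \<rho>\<close> obtain bs where "concat bs = \<nu>2 \<and> (\<forall>b\<in>set bs. b \<noteq> []) \<and> map sum_list bs = \<rho>"
    unfolding refines_def ..
  with \<nu> show ?lhs
    unfolding refines_def by (intro exI[of _ "\<nu>1 # bs"]) auto
qed

lemma refinements_comp_code:
  "0 \<notin> set \<rho> \<Longrightarrow> refinements (comp_code \<rho>) = comp_code ` {\<nu>. 0 \<notin> set \<nu> \<and> refines \<nu> \<rho>}"
proof (induction \<rho>)
  case (Cons l \<rho>)
  show ?case
  proof (intro equalityI subsetI)
    fix Y assume "Y \<in> refinements (comp_code (l # \<rho>))"
    then obtain \<nu>1 \<nu>2 where Y: "Y = comp_code \<nu>1 @ comp_code \<nu>2" "0 \<notin> set \<nu>1" "sum_list \<nu>1 = l"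
        "0 \<notin> set \<nu>2" "refines \<nu>2 \<rho>"
      using Cons by (auto simp: refinements_append refinements_part_code)
    moreover have "\<nu>1 \<noteq> []"
      using Y(3) Cons.prems by auto
    ultimately show "Y \<in> comp_code ` {\<nu>. 0 \<notin> set \<nu> \<and> refines \<nu> (l # \<rho>)}"
      by (intro image_eqI[of _ _ "\<nu>1 @ \<nu>2"]) (auto simp: refines_Cons_right)
  next
    fix Y assume "Y \<in> comp_code ` {\<nu>. 0 \<notin> set \<nu> \<and> refines \<nu> (l # \<rho>)}"
    then obtain \<nu>1 \<nu>2 where "Y = comp_code \<nu>1 @ comp_code \<nu>2" "0 \<notin> set \<nu>1" "sum_list \<nu>1 = l"
        "0 \<notin> set \<nu>2" "refines \<nu>2 \<rho>"
      by (auto simp: refines_Cons_right)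
    then show "Y \<in> refinements (comp_code (l # \<rho>))"
      using Cons by (auto simp: refinements_append refinements_part_code)
  qed
qed force

lemma sum_list_refines: "refines \<nu> \<rho> \<Longrightarrow> sum_list \<nu> = sum_list \<rho>"
proof -
  have "sum_list (concat bs) = sum_list (map sum_list bs)" for bs :: "nat list list"
    by (induction bs) simp_all
  then show "refines \<nu> \<rho> \<Longrightarrow> sum_list \<nu> = sum_list \<rho>"
    by (auto simp: refines_def)
qed

lemma antipode_chi_bn0:
  assumes G: "group G" "finite (carrier G)" "card (carrier G) \<ge> 2"
    and \<mu>: "is_composition n \<mu>" "n \<ge> 1"
    and S: "is_antipode G (sc_one G) (sc_one G) (sc_one G) S"
  shows "S (chi_bn0 G n \<mu>) = scale ((-1) ^ length \<mu>) (hprod G (sc_one G) (map (\<lambda>m. chi_bn0 G m [m]) (rev \<mu>)))"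
proof -
  have "0 \<notin> set \<mu>"
    using \<mu> by (simp add: is_composition_iff)
  then show ?thesis
    using antipode_chi_code[OF G S comp_code_nonempty_last[OF \<mu>]] hprod_chi_bn0[OF G(1), of "rev \<mu>"]
    by (simp add: chi_bn0_eq_tens_code[OF \<mu>] count_list_comp_code reverse_blocks_comp_code)
qed

lemma antipode_ind_bn1:
  assumes G: "group G" "finite (carrier G)" "card (carrier G) \<ge> 2"
    and \<mu>: "is_composition n \<mu>" "n \<ge> 1"
    and S: "is_antipode G (sc_reg G) (sc_one G) (sc_regm1_dual G) S"
  shows "S (ind_bn1 G n \<mu>)
    = (\<Sum>\<nu>\<in>{\<nu>. is_composition n \<nu> \<and> refines \<nu> (rev \<mu>)}. scale ((-1) ^ length \<nu>) (ind_bn1 G n \<nu>))"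
proof -
  let ?N = "{\<nu>. is_composition n \<nu> \<and> refines \<nu> (rev \<mu>)}"
  have \<mu>': "0 \<notin> set (rev \<mu>)" "sum_list (rev \<mu>) = n"
    using \<mu> by (simp_all add: is_composition_iff)
  then have N: "?N = {\<nu>. 0 \<notin> set \<nu> \<and> refines \<nu> (rev \<mu>)}"
    by (auto simp: is_composition_iff dest: sum_list_refines)
  have "S (ind_bn1 G n \<mu>) = (\<Sum>Y\<in>comp_code ` ?N. scale ((-1) ^ count_list Y True) (tens_code G (ind_factor G) Y))"
    using antipode_ind_code[OF G S comp_code_nonempty_last[OF \<mu>]] \<mu>'
    by (simp add: ind_bn1_eq_tens_code[OF \<mu>] reverse_blocks_comp_code refinements_comp_code N)
  also have "\<dots> = (\<Sum>\<nu>\<in>?N. scale ((-1) ^ length \<nu>) (ind_bn1 G n \<nu>))"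
  proof (rule sum.reindex_cong[OF _ refl])
    show "inj_on comp_code ?N"
      using inj_on_comp_code by (rule inj_on_subset) (auto simp: N)
    fix \<nu> assume "\<nu> \<in> ?N"
    then show "scale ((-1) ^ count_list (comp_code \<nu>) True) (tens_code G (ind_factor G) (comp_code \<nu>))
        = scale ((-1) ^ length \<nu>) (ind_bn1 G n \<nu>)"
      using \<mu>(2) by (simp add: count_list_comp_code ind_bn1_eq_tens_code is_composition_iff)
  qed
  finally show ?thesis .
qed

theorem mainTheorem12:
  fixes G :: "('a, 'b) monoid_scheme" and n :: nat and \<mu> :: "nat list"
  assumes "group G" and "finite (carrier G)" and "card (carrier G) \<ge> 2"
    and "n \<ge> 1" and "is_composition n \<mu>"
  shows "(\<forall>S. is_antipode G (sc_one G) (sc_one G) (sc_one G) S \<longrightarrow>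
            S (chi_bn0 G n \<mu>) =
            scale ((-1) ^ length \<mu>) (hprod G (sc_one G) (map (\<lambda>m. chi_bn0 G m [m]) (rev \<mu>))))
       \<and> (\<forall>S. is_antipode G (sc_reg G) (sc_one G) (sc_regm1_dual G) S \<longrightarrow>
            S (ind_bn1 G n \<mu>) =
            (\<Sum>\<nu>\<in>{\<nu>. is_composition n \<nu> \<and> refines \<nu> (rev \<mu>)}.
               scale ((-1) ^ length \<nu>) (ind_bn1 G n \<nu>)))"
  using antipode_chi_bn0[OF assms(1-3,5,4)] antipode_ind_bn1[OF assms(1-3,5,4)] by blast

end
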